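(* Let $\xi$ be a real random variable with mean zero and variance one, let $A,C>0$ be arbitrary constants, let $K$ be a fixed positive integer, and let $r>0$ be a fixed constant. Let $d\in\{1,2,4\}$ and for $1\le i\le n$ let $\mathbf w_i\in\mathbb R^d$ be one of: (d=1) $\mathbf w_i=b_i(x)$ with $x\in I_W$; (d=2) $\mathbf w_i=(b_i(x),c_i(x))$ with $x\in I_W$; (d=4) $\mathbf w_i=(b_i(x),c_i(x),b_i(y),c_i(y))$ with $x,y\in I_W$, $|x-y|\ge N^{\varepsilon_g}$ for a fixed constant $0<\varepsilon_g<1/2$. Let $\phi_i(\eta)=\mathbb E\exp(\mathrm i\,\xi\langle\mathbf w_i,\eta\rangle)$ for $\eta\in\mathbb R^d$. Then, provided $N$ is sufficiently large, for every index set $I\subset\{1,\dots,n\}$ with $|I|\le K$ and every $\eta\in\mathbb R^d$ with $r\le\|\eta\|_2^2\le N^{A}$, \[\Big|\prod_{i\notin I}\phi_i(\eta)\Big|\le N^{-C}.\]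
   Context: Let $0<c_1<c_2$ be constants, $n$ a large integer and $M$ a large parameter (possibly growing with $n$) with $I_W:=[c_1M,c_2M]\subset[0,\sqrt n-M]$; set $N:=M$. For $x>0$ and $1\le i\le n$ let $b_i(x)=\sqrt N\,e^{-x^2/2}\,x^i/\sqrt{i!}$ and $c_i(x)=b_i'(x)=\sqrt N\,e^{-x^2/2}\,\frac{i-x^2}{x}\,\frac{x^i}{\sqrt{i!}}$. These are the step vectors of the random walks $\sum_{i=1}^n\xi_i\mathbf w_i$ associated to Weyl polynomials. *)

theory Defs
  imports "HOL-Probability.Probability"
begin

definition weyl_b :: "real \<Rightarrow> nat \<Rightarrow> real \<Rightarrow> real" where
  "weyl_b N i x = sqrt N * exp (- (x^2) / 2) * x ^ i / sqrt (fact i)"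

definition weyl_c :: "real \<Rightarrow> nat \<Rightarrow> real \<Rightarrow> real" where
  "weyl_c N i x = sqrt N * exp (- (x^2) / 2) * ((real i - x^2) / x) * x ^ i / sqrt (fact i)"

text \<open>Step vector w_i, components indexed by j < d:
  (b_i(x), c_i(x), b_i(y), c_i(y)); for d = 1 only component 0 is used, for d = 2
  components 0 and 1, for d = 4 all four.\<close>
definition weyl_w :: "real \<Rightarrow> real \<Rightarrow> real \<Rightarrow> nat \<Rightarrow> nat \<Rightarrow> real" where
  "weyl_w N x y i j =
     (if j = 0 then weyl_b N i x else if j = 1 then weyl_c N i x
      else if j = 2 then weyl_b N i y else weyl_c N i y)"

definition weyl_phi ::
  "'a measure \<Rightarrow> ('a \<Rightarrow> real) \<Rightarrow> nat \<Rightarrow> real \<Rightarrow> real \<Rightarrow> real \<Rightarrow> nat \<Rightarrow> (nat \<Rightarrow> real) \<Rightarrow> complex" where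
  "weyl_phi M \<xi> d N x y i \<eta> =
     (\<integral>\<omega>. exp (\<i> * complex_of_real (\<xi> \<omega> * (\<Sum>j<d. weyl_w N x y i j * \<eta> j))) \<partial>M)"

end

theory Submission
  imports Defs "HOL-Real_Asymp.Real_Asymp"
begin

(* Since |phi_i(eta)| = E cos (xi <w_i, eta> - theta_i) for some phase theta_i and t <= exp (t - 1),
   the product is at most exp (- sum_i (1 - |phi_i(eta)|)). Having mean zero and unit variance,
   xi has mass p > 0 both in some [a1, b1] and in some [-b2, -a2] with a1, a2 > 0, and by
   1 - cos (a - b) <= 2 (1 - cos a) + 2 (1 - cos b) it suffices to show the deterministic bound
   sum_i (1 - cos (sigma <w_i, eta>)) >= (4 C / p) ln N + 2 K for all sigma in [a1 + a2, b1 + b2].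

   For that, b_i(x)^2 = N * Pr (Poisson (x^2) = i) and c_i(x) = b_i(x) (i - x^2) / x, so a pair
   (b_i(x), c_i(x)) contributes b_i(x) times an affine function of i. On the window
   x^2 <= i <= x^2 + N^(1 + eps/2) the Poisson weights start at the mode, decay slowly and end
   up negligible, while the weights of the other point y are negligible throughout because y^2
   is far away. The last index of the window with a large term is therefore followed by about
   N^(1 - eps/2) indices whose terms are small, so that 1 - cos t is comparable to t^2 there, and
   the slow decay of the weights forces the squares of these terms to add up to order
   N^(1 - eps/2). *)

section \<open>Poisson weights\<close>

lemma pmf_poisson_Suc:
  assumes "0 < l"
  shows "pmf (poisson_pmf l) (Suc i) = pmf (poisson_pmf l) i * (l / real (Suc i))"
  using assms by (simp add: divide_simps del: of_nat_Suc)

lemma pmf_poisson_add_ge: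
  assumes l: "0 < l"
  shows "pmf (poisson_pmf l) i * (l / real (i + m)) ^ m \<le> pmf (poisson_pmf l) (i + m)"
proof (induction m)
  case (Suc m)
  let ?p = "pmf (poisson_pmf l)"
  have "?p i * (l / real (i + Suc m)) ^ Suc m \<le> ?p i * (l / real (i + m)) ^ m * (l / real (i + Suc m))"
  proof (cases "i + m = 0")
    case False
    have "(l / real (i + Suc m)) ^ m \<le> (l / real (i + m)) ^ m"
      using False l by (intro power_mono divide_left_mono) auto
    then show ?thesis
      using l by (simp only: power_Suc2 mult.assoc) (intro mult_left_mono mult_right_mono, auto)
  qed (simp del: pmf_poisson)
  also have "\<dots> \<le> ?p (i + m) * (l / real (i + Suc m))"
    using Suc.IH l by (intro mult_right_mono) auto
  also have "\<dots> = ?p (i + Suc m)"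
    using pmf_poisson_Suc[OF l, of "i + m"] by simp
  finally show ?case .
qed simp

lemma pmf_poisson_add_le:
  assumes l: "0 < l"
  shows "pmf (poisson_pmf l) (i + m) \<le> pmf (poisson_pmf l) i * (l / real (Suc i)) ^ m"
proof (induction m)
  case (Suc m)
  let ?p = "pmf (poisson_pmf l)"
  have "?p (i + Suc m) = ?p (i + m) * (l / real (Suc (i + m)))"
    using pmf_poisson_Suc[OF l, of "i + m"] by simp
  also have "\<dots> \<le> ?p (i + m) * (l / real (Suc i))"
    using l by (intro mult_left_mono divide_left_mono) auto
  also have "\<dots> \<le> ?p i * (l / real (Suc i)) ^ m * (l / real (Suc i))"
    using Suc.IH l by (intro mult_right_mono) auto
  finally show ?case by (simp only: power_Suc2 mult.assoc)
qed simp

lemma pmf_poisson_le_add: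
  assumes l: "0 < l"
  shows "pmf (poisson_pmf l) i \<le> pmf (poisson_pmf l) (i + m) * (real (i + m) / l) ^ m"
proof (induction m)
  case (Suc m)
  let ?p = "pmf (poisson_pmf l)"
  have step: "?p (i + m) = ?p (i + Suc m) * (real (Suc (i + m)) / l)"
    using pmf_poisson_Suc[OF l, of "i + m"] l by (simp add: field_simps del: pmf_poisson)
  have "?p i \<le> ?p (i + m) * (real (i + m) / l) ^ m" by (rule Suc.IH)
  also have "\<dots> \<le> ?p (i + Suc m) * (real (Suc (i + m)) / l) * (real (i + Suc m) / l) ^ m"
    unfolding step using l by (intro mult_left_mono power_mono divide_right_mono) auto
  finally show ?case by (simp add: power_Suc mult_ac)
qed simp

lemma power_le_exp_neg:
  fixes q w h :: real
  assumes "0 \<le> q" "q \<le> 1 - w" "0 \<le> w" "h - 1 \<le> real m"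
  shows "q ^ m \<le> exp (- (h - 1) * w)"
proof -
  have "q ^ m \<le> exp (- w) ^ m"
    using assms exp_ge_add_one_self[of "- w"] by (intro power_mono) auto
  also have "\<dots> = exp (- (real m * w))" by (simp add: exp_of_nat_mult[symmetric])
  also have "\<dots> \<le> exp (- (h - 1) * w)"
    using mult_right_mono[OF assms(4,3)] by (simp add: algebra_simps)
  finally show ?thesis .
qed

lemma pmf_poisson_tail:
  assumes l: "0 < l" and h: "1 \<le> h" and far: "l + 2 * h \<le> real i \<or> real i + 2 * h \<le> l"
  shows "pmf (poisson_pmf l) i \<le> exp (- (h - 1) * (h / (l + h)))"
proof -
  let ?p = "pmf (poisson_pmf l)"
  define m where "m = nat \<lfloor>h\<rfloor>"
  have m: "real m \<le> h" "h - 1 \<le> real m" unfolding m_def using h by linarith+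
  have w: "0 \<le> h / (l + h)" using l h by simp
  from far show ?thesis
  proof
    assume right: "l + 2 * h \<le> real i"
    have "real m \<le> real i" using right m l by linarith
    then obtain i0 where i0: "i = i0 + m" by (metis le_add_diff_inverse2 of_nat_le_iff)
    have "?p i \<le> ?p i0 * (l / real (Suc i0)) ^ m" unfolding i0 by (rule pmf_poisson_add_le[OF l])
    also have "\<dots> \<le> (l / real (Suc i0)) ^ m"
      using l by (intro mult_left_le_one_le) (auto simp: pmf_le_1 simp del: pmf_poisson)
    also have "\<dots> \<le> exp (- (h - 1) * (h / (l + h)))"
    proof (rule power_le_exp_neg[OF _ _ w m(2)])
      have "l / real (Suc i0) \<le> l / (l + h)"
        using right i0 m l h by (intro divide_left_mono) auto
      also have "\<dots> = 1 - h / (l + h)" using l h by (simp add: field_simps)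
      finally show "l / real (Suc i0) \<le> 1 - h / (l + h)" .
    qed (use l in simp)
    finally show ?thesis .
  next
    assume left: "real i + 2 * h \<le> l"
    have "?p i \<le> ?p (i + m) * (real (i + m) / l) ^ m" by (rule pmf_poisson_le_add[OF l])
    also have "\<dots> \<le> (real (i + m) / l) ^ m"
      using l by (intro mult_left_le_one_le) (auto simp: pmf_le_1 simp del: pmf_poisson)
    also have "\<dots> \<le> exp (- (h - 1) * (h / (l + h)))"
    proof (rule power_le_exp_neg[OF _ _ w m(2)])
      have "real (i + m) / l \<le> (l - h) / l"
        using left m l by (intro divide_right_mono) auto
      also have "\<dots> \<le> 1 - h / (l + h)" using l h by (simp add: field_simps)
      finally show "real (i + m) / l \<le> 1 - h / (l + h)" .
    qed (use l in simp)
    finally show ?thesis .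
  qed
qed

lemma ln_one_plus_ge:
  assumes "0 \<le> (z::real)"
  shows "2 * z / (2 + z) \<le> ln (1 + z)"
proof -
  let ?g = "\<lambda>z::real. ln (1 + z) - 2 * z / (2 + z)"
  have "?g 0 \<le> ?g z"
  proof (rule deriv_nonneg_imp_mono[of 0 z ?g "\<lambda>z. 1 / (1 + z) - 4 / (2 + z)^2"])
    fix t assume "t \<in> {0..z}"
    hence t: "0 \<le> t" by simp
    show "(?g has_real_derivative 1 / (1 + t) - 4 / (2 + t)^2) (at t)"
      using t by (auto intro!: derivative_eq_intros simp: field_simps power2_eq_square)
    have "4 / (2 + t)^2 \<le> 1 / (1 + t)"
      using t by (simp add: divide_simps) (simp add: power2_eq_square algebra_simps)
    thus "0 \<le> 1 / (1 + t) - 4 / (2 + t)^2" by simp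
  qed (use assms in auto)
  thus ?thesis by simp
qed

lemma exp_one_le_power_sqrt:
  assumes "1 \<le> k"
  shows "exp 1 \<le> (1 + 1 / real k) ^ k * sqrt (1 + 1 / real k)"
proof -
  have k: "1 \<le> real k" using assms by simp
  have q: "0 < 1 + 1 / real k" using k by (simp add: add_pos_pos)
  have "1 = (real k + 1/2) * (2 * (1 / real k) / (2 + 1 / real k))" using k by (simp add: field_simps)
  also have "\<dots> \<le> (real k + 1/2) * ln (1 + 1 / real k)"
    by (rule mult_left_mono[OF ln_one_plus_ge]) (use k in auto)
  finally have "exp 1 \<le> (1 + 1 / real k) powr (real k + 1/2)"
    using q by (simp add: powr_def)
  also have "\<dots> = (1 + 1 / real k) ^ k * sqrt (1 + 1 / real k)"
    by (simp add: powr_add powr_realpow[OF q] powr_half_sqrt)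
  finally show ?thesis .
qed

lemma fact_le_stirling:
  assumes "1 \<le> k"
  shows "fact k \<le> exp 1 * sqrt (real k) * (real k / exp 1) ^ k"
  using assms
proof (induction k rule: dec_induct)
  case (step k)
  have k: "1 \<le> real k" using step by simp
  have "sqrt (real k) * real k ^ k * exp 1
      \<le> sqrt (real k) * real k ^ k * ((1 + 1 / real k) ^ k * sqrt (1 + 1 / real k))"
    using exp_one_le_power_sqrt[OF step.hyps(1)] by (intro mult_left_mono) auto
  also have "\<dots> = sqrt (real (Suc k)) * real (Suc k) ^ k"
  proof -
    have "1 + 1 / real k = real (Suc k) / real k" using k by (simp add: field_simps)
    thus ?thesis using k by (simp add: power_divide real_sqrt_divide field_simps)
  qed
  finally have ratio: "sqrt (real k) * real k ^ k * exp 1 \<le> sqrt (real (Suc k)) * real (Suc k) ^ k" .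
  have "fact (Suc k) = real (Suc k) * fact k" by simp
  also have "\<dots> \<le> real (Suc k) * (exp 1 * sqrt (real k) * (real k / exp 1) ^ k)"
    using step.IH by (intro mult_left_mono) auto
  also have "\<dots> = real (Suc k) / exp 1 ^ k * (sqrt (real k) * real k ^ k * exp 1)"
    by (simp add: power_divide field_simps)
  also have "\<dots> \<le> real (Suc k) / exp 1 ^ k * (sqrt (real (Suc k)) * real (Suc k) ^ k)"
    using ratio by (intro mult_left_mono) auto
  also have "\<dots> = exp 1 * sqrt (real (Suc k)) * (real (Suc k) / exp 1) ^ Suc k"
    by (simp add: power_divide field_simps)
  finally show ?case .
qed simp

lemma pmf_poisson_ceiling_ge:
  assumes l: "1 \<le> l"
  shows "1 / (exp 2 * sqrt (real (nat \<lceil>l\<rceil>))) \<le> pmf (poisson_pmf l) (nat \<lceil>l\<rceil>)"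
proof -
  define a where "a = nat \<lceil>l\<rceil>"
  have al: "l \<le> real a" "real a < l + 1" unfolding a_def using l by linarith+
  have a: "1 \<le> a" "0 < real a" using al l by linarith+
  have quadratic: "-1 \<le> (real a - l) + real a * ln (l / real a)"
  proof -
    have "ln (real a / l) \<le> real a / l - 1" using a l by (intro ln_le_minus_one) simp
    hence "real a * (- (real a / l - 1)) \<le> real a * ln (l / real a)"
      using a l by (intro mult_left_mono) (auto simp: ln_div)
    moreover have "(real a - l) + real a * (- (real a / l - 1)) = - ((real a - l)^2 / l)"
      using l by (simp add: field_simps power2_eq_square)
    moreover have "(real a - l)^2 \<le> l"
      using al l by (smt (verit) mult_le_one power2_eq_square)
    ultimately show ?thesis using l by (smt (verit) divide_le_eq_1)
  qed
  have "1 / (exp 2 * sqrt (real a)) = 1 / (exp 1 * sqrt (real a)) * exp (-1)"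
  proof -
    have "exp 2 = exp 1 * exp (1::real)" by (simp flip: exp_add)
    thus ?thesis by (simp add: exp_minus field_simps)
  qed
  also have "\<dots> \<le> 1 / (exp 1 * sqrt (real a)) * (exp (real a - l) * (l / real a) ^ a)"
  proof (rule mult_left_mono)
    have "exp (real a - l) * (l / real a) ^ a = exp ((real a - l) + real a * ln (l / real a))"
      using a l by (simp add: exp_add exp_of_nat_mult)
    thus "exp (-1) \<le> exp (real a - l) * (l / real a) ^ a" using quadratic by simp
  qed simp
  also have "\<dots> = exp (- l) * l ^ a / (exp 1 * sqrt (real a) * (real a / exp 1) ^ a)"
    using a by (simp add: power_divide exp_diff exp_minus exp_of_nat_mult[symmetric] field_simps)
  also have "\<dots> \<le> exp (- l) * l ^ a / fact a"
    using a l by (intro divide_left_mono fact_le_stirling) auto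
  also have "\<dots> = pmf (poisson_pmf l) a" using l by simp
  finally show ?thesis unfolding a_def .
qed

lemma pmf_poisson_shift_ge_half:
  assumes x: "8 \<le> x"
  shows "pmf (poisson_pmf (x^2)) (nat \<lceil>x^2\<rceil>) / 2 \<le> pmf (poisson_pmf (x^2)) (nat \<lceil>x^2\<rceil> + nat \<lceil>x/4\<rceil>)"
proof -
  define a m where "a = nat \<lceil>x^2\<rceil>" and "m = nat \<lceil>x/4\<rceil>"
  define A where "A = real (a + m)"
  have x2: "0 < x^2" using x by simp
  have m: "x/4 \<le> real m" "real m \<le> x/4 + 1" unfolding m_def using x by linarith+
  have A: "x^2 \<le> A" "A \<le> x^2 + x/4 + 2" unfolding A_def a_def using m x2 by linarith+
  have A_pos: "0 < A" using A x2 by linarith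
  define w where "w = (A - x^2) / A"
  have w: "0 \<le> w" "w \<le> 1" unfolding w_def using A A_pos by auto
  have xA: "x^2 / A = 1 - w" unfolding w_def using A_pos by (simp add: field_simps)
  have "real m * w \<le> (x/4 + 1) * ((x/4 + 2) / x^2)"
  proof (rule mult_mono)
    have "w \<le> (A - x^2) / x^2" unfolding w_def using A mult_pos_pos[OF A_pos x2] by (intro divide_left_mono) auto
    also have "\<dots> \<le> (x/4 + 2) / x^2" using A x2 by (intro divide_right_mono) auto
    finally show "w \<le> (x/4 + 2) / x^2" .
  qed (use m w x in auto)
  also have "\<dots> \<le> 1/2"
  proof -
    have "8 * x \<le> x * x" using x by (intro mult_right_mono) auto
    moreover have "(x/4 + 1) * (x/4 + 2) = x * x / 16 + 3 * x / 4 + 2" by (simp add: algebra_simps)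
    ultimately have "(x/4 + 1) * (x/4 + 2) \<le> x^2 / 2" unfolding power2_eq_square using x by linarith
    thus ?thesis using x by (simp add: field_simps)
  qed
  finally have "1/2 \<le> (x^2 / A) ^ m"
    using Bernoulli_inequality[of "- w" m] w unfolding xA by simp
  hence "pmf (poisson_pmf (x^2)) a * (1/2) \<le> pmf (poisson_pmf (x^2)) a * (x^2 / A) ^ m"
    by (intro mult_left_mono) auto
  also have "\<dots> \<le> pmf (poisson_pmf (x^2)) (a + m)"
    unfolding A_def by (rule pmf_poisson_add_ge[OF x2])
  finally show ?thesis unfolding a_def m_def by simp
qed

section \<open>Sums of 1 - cos over a window\<close>

lemma one_minus_cos_ge_square:
  assumes "\<bar>t\<bar> \<le> 1"
  shows "t^2 / 5 \<le> 1 - cos (t::real)"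
proof -
  define v where "v = t / 2"
  have v: "\<bar>v\<bar> \<le> 1/2" using assms unfolding v_def by simp
  have "\<bar>sin v - (\<Sum>m<3. sin_coeff m * v ^ m)\<bar> \<le> inverse (fact 3) * \<bar>v\<bar> ^ 3"
    by (rule Maclaurin_sin_bound)
  moreover have "(\<Sum>m<3. sin_coeff m * v ^ m) = v" by (simp add: numeral_3_eq_3 sin_coeff_def)
  moreover have "inverse (fact 3) = (1/6::real)" by (simp add: numeral_3_eq_3)
  ultimately have taylor: "\<bar>sin v - v\<bar> \<le> \<bar>v\<bar>^3 / 6" by simp
  have "\<bar>v\<bar>^3 \<le> \<bar>v\<bar> * (1/4)"
  proof -
    have "\<bar>v\<bar>^2 \<le> (1/2)^2" by (rule power_mono[OF v]) simp
    hence "\<bar>v\<bar> * \<bar>v\<bar>^2 \<le> \<bar>v\<bar> * (1/4)" by (intro mult_left_mono) (auto simp: power2_eq_square)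
    thus ?thesis by (simp add: power3_eq_cube power2_eq_square)
  qed
  hence "\<bar>v\<bar> * (23/24) \<le> \<bar>sin v\<bar>" using taylor by linarith
  hence "(\<bar>v\<bar> * (23/24))^2 \<le> \<bar>sin v\<bar>^2" by (rule power_mono) simp
  moreover have "(\<bar>v\<bar> * (23/24))^2 = v^2 * (529/576)" by (simp add: power_mult_distrib power2_eq_square)
  ultimately have "2 * v^2 \<le> 5 * (sin v)^2" using zero_le_power2[of v] power2_abs[of "sin v"] by linarith
  moreover have "cos t = 1 - 2 * (sin v)^2" unfolding v_def using cos_double_sin[of "t/2"] by simp
  moreover have "t^2 = 4 * v^2" unfolding v_def by (simp add: power_divide)
  ultimately show ?thesis by simp
qed

lemma one_minus_cos_diff_le: "1 - cos (a - b) \<le> 2 * (1 - cos a) + 2 * (1 - cos (b::real))"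
proof -
  have half_angle: "1 - cos u = 2 * (sin (u/2))^2" for u :: real
    using cos_double_sin[of "u/2"] by simp
  have "\<bar>sin ((a - b)/2)\<bar> \<le> \<bar>sin (a/2)\<bar> * \<bar>cos (b/2)\<bar> + \<bar>cos (a/2)\<bar> * \<bar>sin (b/2)\<bar>"
    using sin_diff[of "a/2" "b/2"] by (simp add: diff_divide_distrib abs_mult[symmetric] abs_triangle_ineq4)
  also have "\<dots> \<le> \<bar>sin (a/2)\<bar> + \<bar>sin (b/2)\<bar>"
    by (intro add_mono mult_left_le mult_left_le_one_le) auto
  finally have "(sin ((a - b)/2))^2 \<le> (\<bar>sin (a/2)\<bar> + \<bar>sin (b/2)\<bar>)^2"
    using power_mono[of "\<bar>sin ((a - b)/2)\<bar>" _ 2] by simp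
  also have "\<dots> \<le> 2 * (sin (a/2))^2 + 2 * (sin (b/2))^2"
  proof -
    have "(\<bar>u\<bar> + \<bar>v\<bar>)^2 + (\<bar>u\<bar> - \<bar>v\<bar>)^2 = 2 * u^2 + 2 * v^2" for u v :: real
      by (simp add: power2_sum power2_diff)
    thus ?thesis by (metis le_add_same_cancel1 zero_le_power2)
  qed
  finally show ?thesis unfolding half_angle[of "a - b"] half_angle[of a] half_angle[of b] by simp
qed

lemma sum_one_minus_cos_le_diff:
  assumes "finite A" "I \<subseteq> A"
  shows "(\<Sum>i\<in>A. 1 - cos (t i)) \<le> (\<Sum>i\<in>A - I. 1 - cos (t i)) + 2 * real (card I)"
proof -
  have "(\<Sum>i\<in>I. 1 - cos (t i)) \<le> real (card I) * 2"
    by (rule sum_bounded_above) (smt (verit) cos_ge_minus_one)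
  moreover have "(\<Sum>i\<in>A. 1 - cos (t i)) = (\<Sum>i\<in>A - I. 1 - cos (t i)) + (\<Sum>i\<in>I. 1 - cos (t i))"
    using assms by (intro sum.subset_diff)
  ultimately show ?thesis by linarith
qed

lemma affine_square_le: "(L j)^2 \<le> 5 * ((L (j + k))^2 + (L (j + 2 * k))^2)"
  if "\<And>i. L i = p + q * real i" for L :: "nat \<Rightarrow> real"
proof -
  have "L j = 2 * L (j + k) - L (j + 2 * k)" unfolding that by (simp add: algebra_simps)
  moreover have "(2 * a - b)^2 \<le> 5 * (a^2 + b^2)" for a b :: real
    using zero_le_power2[of "a + 2 * b"] by (simp add: power2_eq_square algebra_simps)
  ultimately show ?thesis by simp
qed

lemma slow_decay_square_ge_half:
  fixes \<beta> :: "nat \<Rightarrow> real"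
  assumes \<beta>: "\<And>i. 0 \<le> \<beta> i" and ratio: "\<And>k. k < K \<Longrightarrow> (1 - \<delta>) * \<beta> (j + k) \<le> \<beta> (j + Suc k)"
    and \<delta>: "0 \<le> \<delta>" "\<delta> \<le> 1" "4 * real K * \<delta> \<le> 1" and k: "k \<le> K"
  shows "(\<beta> j)^2 / 2 \<le> (\<beta> (j + k))^2"
proof -
  have decay: "(1 - \<delta>) ^ k * \<beta> j \<le> \<beta> (j + k)" if "k \<le> K" for k
    using that
  proof (induction k)
    case (Suc k)
    have "(1 - \<delta>) ^ Suc k * \<beta> j \<le> (1 - \<delta>) * \<beta> (j + k)"
      using Suc \<delta> by (simp add: mult.assoc mult_left_mono)
    also have "\<dots> \<le> \<beta> (j + Suc k)" using ratio Suc.prems by simp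
    finally show ?case .
  qed simp
  have "1 - real (2 * k) * \<delta> \<le> (1 - \<delta>) ^ (2 * k)"
    using Bernoulli_inequality[of "- \<delta>" "2 * k"] \<delta> by simp
  moreover have "real (2 * k) * \<delta> \<le> 1/2"
    using \<delta> k mult_right_mono[of "real (2 * k)" "2 * real K" \<delta>] by simp
  ultimately have "(1/2) * (\<beta> j)^2 \<le> ((1 - \<delta>) ^ k)^2 * (\<beta> j)^2"
    by (intro mult_right_mono) (auto simp: power_mult[symmetric] mult.commute)
  also have "\<dots> = ((1 - \<delta>) ^ k * \<beta> j)^2" by (simp add: power_mult_distrib)
  also have "\<dots> \<le> (\<beta> (j + k))^2"
    using decay[OF k] \<beta> \<delta> by (intro power_mono) auto
  finally show ?thesis by simp
qed

text \<open>Since L j = 2 L (j + k) - L (j + 2k), an affine L cannot be small at both j + k and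
  j + 2k; a slowly decaying weight carries this over to every such pair.\<close>
lemma sum_squares_slowly_varying_affine:
  fixes \<beta> L :: "nat \<Rightarrow> real"
  assumes \<beta>: "\<And>i. 0 \<le> \<beta> i" and ratio: "\<And>k. k < 2 * T \<Longrightarrow> (1 - \<delta>) * \<beta> (j + k) \<le> \<beta> (j + Suc k)"
    and \<delta>: "0 \<le> \<delta>" "\<delta> \<le> 1" "8 * real T * \<delta> \<le> 1"
    and L: "\<And>i. L i = p + q * real i"
  shows "real T * (\<beta> j * L j)^2 / 20 \<le> (\<Sum>i\<in>{j+1..j+2*T}. (\<beta> i * L i)^2)"
proof -
  define s where "s i = (\<beta> i * L i)^2" for i
  have half: "(\<beta> j)^2 / 2 \<le> (\<beta> (j + k))^2" if "k \<le> 2 * T" for k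
    using slow_decay_square_ge_half[where K = "2 * T", OF \<beta> ratio \<delta>(1,2) _ that] \<delta>(3) by simp
  have pair: "s j / 10 \<le> s (j + k) + s (j + 2 * k)" if "k \<le> T" for k
  proof -
    have L5: "(L j)^2 / 5 \<le> (L (j + k))^2 + (L (j + 2 * k))^2"
      using affine_square_le[OF L, of j k] by simp
    have "s j / 10 = ((\<beta> j)^2 / 2) * ((L j)^2 / 5)" unfolding s_def by (simp add: power_mult_distrib)
    also have "\<dots> \<le> ((\<beta> j)^2 / 2) * ((L (j + k))^2 + (L (j + 2 * k))^2)"
      using L5 by (rule mult_left_mono) simp
    also have "\<dots> = (\<beta> j)^2 / 2 * (L (j + k))^2 + (\<beta> j)^2 / 2 * (L (j + 2 * k))^2"
      by (simp add: algebra_simps)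
    also have "\<dots> \<le> (\<beta> (j + k))^2 * (L (j + k))^2 + (\<beta> (j + 2 * k))^2 * (L (j + 2 * k))^2"
      using half[of k] half[of "2 * k"] that by (intro add_mono mult_right_mono) auto
    finally show ?thesis unfolding s_def by (simp add: power_mult_distrib)
  qed
  have sum1: "(\<Sum>k\<in>{1..T}. s (j + k)) \<le> (\<Sum>i\<in>{j+1..j+2*T}. s i)"
  proof -
    have "(\<Sum>k\<in>{1..T}. s (j + k)) = (\<Sum>i\<in>(\<lambda>k. j + k) ` {1..T}. s i)"
      by (subst sum.reindex) (auto simp: inj_on_def)
    also have "\<dots> \<le> (\<Sum>i\<in>{j+1..j+2*T}. s i)" by (rule sum_mono2) (auto simp: s_def)
    finally show ?thesis .
  qed
  have sum2: "(\<Sum>k\<in>{1..T}. s (j + 2 * k)) \<le> (\<Sum>i\<in>{j+1..j+2*T}. s i)"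
  proof -
    have "(\<Sum>k\<in>{1..T}. s (j + 2 * k)) = (\<Sum>i\<in>(\<lambda>k. j + 2 * k) ` {1..T}. s i)"
      by (subst sum.reindex) (auto simp: inj_on_def)
    also have "\<dots> \<le> (\<Sum>i\<in>{j+1..j+2*T}. s i)" by (rule sum_mono2) (auto simp: s_def)
    finally show ?thesis .
  qed
  have "real T * (s j / 10) = (\<Sum>k\<in>{1..T}. s j / 10)" by simp
  also have "\<dots> \<le> (\<Sum>k\<in>{1..T}. s (j + k) + s (j + 2 * k))" by (rule sum_mono) (use pair in auto)
  also have "\<dots> \<le> 2 * (\<Sum>i\<in>{j+1..j+2*T}. s i)" using sum1 sum2 by (simp add: sum.distrib)
  finally have "real T * s j / 20 \<le> (\<Sum>i\<in>{j+1..j+2*T}. s i)" by simp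
  thus ?thesis unfolding s_def .
qed

lemma sum_squares_perturbed_ge:
  fixes s t :: "'i \<Rightarrow> real"
  assumes "\<And>i. i \<in> W \<Longrightarrow> \<bar>t i - s i\<bar> \<le> \<epsilon>"
  shows "(\<Sum>i\<in>W. (s i)^2) / 2 - real (card W) * \<epsilon>^2 \<le> (\<Sum>i\<in>W. (t i)^2)"
proof -
  have "(\<Sum>i\<in>W. (s i)^2) / 2 \<le> (\<Sum>i\<in>W. (t i)^2 + \<epsilon>^2)"
    unfolding sum_divide_distrib
  proof (rule sum_mono)
    fix i assume "i \<in> W"
    hence "(t i - s i)^2 \<le> \<epsilon>^2" using assms by (metis abs_ge_zero power2_abs power_mono)
    moreover have "(s i)^2 \<le> 2 * (t i)^2 + 2 * (t i - s i)^2"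
      using zero_le_power2[of "2 * t i - s i"] by (simp add: power2_eq_square algebra_simps)
    ultimately show "(s i)^2 / 2 \<le> (t i)^2 + \<epsilon>^2" by simp
  qed
  thus ?thesis by (simp add: sum.distrib)
qed

text \<open>Let j be the last index of the window with \<tau> \<le> |t j|. On the 2T indices after j,
  |t i| < \<tau> \<le> 1, where 1 - cos is comparable to the square, and there the squares add up
  because \<beta> * L varies slowly.\<close>
lemma sum_one_minus_cos_window_ge:
  fixes t \<beta> L :: "nat \<Rightarrow> real" and lo hi i0 T :: nat
  assumes \<beta>: "\<And>i. 0 \<le> \<beta> i"
    and ratio: "\<And>i. lo \<le> i \<Longrightarrow> i < hi \<Longrightarrow> (1 - \<delta>) * \<beta> i \<le> \<beta> (Suc i)"
    and \<delta>: "0 \<le> \<delta>" "\<delta> \<le> 1" "8 * real T * \<delta> \<le> 1"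
    and L: "\<And>i. L i = p + q * real i"
    and \<tau>: "0 < \<tau>" "\<tau> \<le> 1"
    and close: "\<And>i. lo \<le> i \<Longrightarrow> i \<le> hi \<Longrightarrow> \<bar>t i - \<beta> i * L i\<bar> \<le> \<tau> / 20"
    and large: "lo \<le> i0" "i0 \<le> hi" "\<tau> \<le> \<bar>t i0\<bar>"
    and tail: "\<And>i. hi \<le> i + 2 * T \<Longrightarrow> i \<le> hi \<Longrightarrow> \<bar>t i\<bar> < \<tau>"
  shows "real T * \<tau>^2 / 500 \<le> (\<Sum>i\<in>{lo..hi}. 1 - cos (t i))"
proof -
  obtain j where j: "lo \<le> j" "j \<le> hi" "\<tau> \<le> \<bar>t j\<bar>"
    and last: "\<And>i. lo \<le> i \<and> i \<le> hi \<and> \<tau> \<le> \<bar>t i\<bar> \<Longrightarrow> i \<le> j"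
    using Nat.ex_has_greatest_nat[of "\<lambda>i. lo \<le> i \<and> i \<le> hi \<and> \<tau> \<le> \<bar>t i\<bar>" i0 hi] large by blast
  have after_j: "\<bar>t i\<bar> < \<tau>" if "j < i" "i \<le> hi" for i
    using last[of i] that j by force
  have jT: "j + 2 * T \<le> hi"
    using tail[of j] j by force
  define s where "s i = \<beta> i * L i" for i
  let ?W = "{j+1..j+2*T}"
  have "real T * (s j)^2 / 20 \<le> (\<Sum>i\<in>?W. (s i)^2)"
    unfolding s_def using jT j
    by (intro sum_squares_slowly_varying_affine[OF \<beta> _ \<delta> L]) (auto intro: ratio)
  moreover have "361 / 400 * \<tau>^2 \<le> (s j)^2"
  proof -
    have "19 / 20 * \<tau> \<le> \<bar>s j\<bar>" using close[of j] j unfolding s_def by linarith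
    hence "(19 / 20 * \<tau>)^2 \<le> \<bar>s j\<bar>^2" using \<tau> by (intro power_mono) auto
    thus ?thesis by (simp add: power2_eq_square)
  qed
  ultimately have "real T * \<tau>^2 * (361 / 16000) \<le> (\<Sum>i\<in>?W. (s i)^2) / 2"
    using mult_left_mono[of "361 / 400 * \<tau>^2" "(s j)^2" "real T"] by simp
  also have "(\<Sum>i\<in>?W. (s i)^2) / 2 \<le> (\<Sum>i\<in>?W. (t i)^2) + real T * \<tau>^2 / 200"
    using sum_squares_perturbed_ge[of ?W t s "\<tau> / 20"] close j jT unfolding s_def
    by (simp add: power_divide)
  finally have "real T * \<tau>^2 * (281 / 16000) \<le> (\<Sum>i\<in>?W. (t i)^2)" by simp
  hence "real T * \<tau>^2 / 100 \<le> (\<Sum>i\<in>?W. (t i)^2)"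
    using zero_le_power2[of \<tau>] mult_nonneg_nonneg[of "real T" "\<tau>^2"] by linarith
  also have "\<dots> \<le> (\<Sum>i\<in>?W. 5 * (1 - cos (t i)))"
  proof (rule sum_mono)
    fix i assume "i \<in> ?W"
    hence "\<bar>t i\<bar> \<le> 1" using after_j[of i] jT \<tau> by simp
    thus "(t i)^2 \<le> 5 * (1 - cos (t i))" using one_minus_cos_ge_square by fastforce
  qed
  also have "\<dots> \<le> 5 * (\<Sum>i\<in>{lo..hi}. 1 - cos (t i))"
    unfolding sum_distrib_left[symmetric] using j jT by (intro mult_left_mono sum_mono2) auto
  finally show ?thesis by simp
qed

section \<open>The step vectors of the Weyl walk\<close>

lemma weyl_b_Suc: "weyl_b N (Suc i) x = weyl_b N i x * x / sqrt (real (Suc i))"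
proof -
  have "sqrt (fact (Suc i)) = sqrt (fact i) * sqrt (real (Suc i))"
    by (simp add: real_sqrt_mult mult.commute)
  thus ?thesis unfolding weyl_b_def by (simp add: field_simps)
qed

lemma weyl_c_eq: "weyl_c N i x = weyl_b N i x * ((real i - x^2) / x)"
  unfolding weyl_b_def weyl_c_def by (simp add: field_simps)

lemma weyl_b_nonneg: "0 \<le> N \<Longrightarrow> 0 < x \<Longrightarrow> 0 \<le> weyl_b N i x"
  unfolding weyl_b_def by simp

lemma weyl_b_square:
  assumes "0 \<le> N" "0 < x"
  shows "(weyl_b N i x)^2 = N * pmf (poisson_pmf (x^2)) i"
proof -
  have "(exp (- (x^2) / 2))^2 = exp (- (x^2))"
    by (simp add: power2_eq_square exp_add[symmetric])
  thus ?thesis using assms unfolding weyl_b_def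
    by (simp add: power_mult_distrib power_divide power_mult[symmetric] mult.commute[of 2])
qed

lemma weyl_b_slow_decay:
  assumes N: "0 \<le> N" and x: "0 < x" and \<delta>: "0 \<le> \<delta>" "\<delta> \<le> 1"
    and i: "(1 - \<delta>)^2 * real (Suc i) \<le> x^2"
  shows "(1 - \<delta>) * weyl_b N i x \<le> weyl_b N (Suc i) x"
proof -
  have "sqrt ((1 - \<delta>)^2 * real (Suc i)) \<le> sqrt (x^2)" using i by (rule real_sqrt_le_mono)
  hence "(1 - \<delta>) * sqrt (real (Suc i)) \<le> x" using \<delta> x by (simp add: real_sqrt_mult)
  hence "1 - \<delta> \<le> x / sqrt (real (Suc i))" by (simp add: field_simps)
  hence "(1 - \<delta>) * weyl_b N i x \<le> x / sqrt (real (Suc i)) * weyl_b N i x"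
    using weyl_b_nonneg[OF N x] by (rule mult_right_mono)
  thus ?thesis by (simp add: weyl_b_Suc mult_ac)
qed

lemma weyl_b_decay_near_square:
  assumes N: "0 \<le> N" and x: "0 < x" and R: "1 \<le> R" "2 * R \<le> x^2"
    and i: "real (Suc i) \<le> x^2 + R + 1"
  shows "(1 - 2 * R / x^2) * weyl_b N i x \<le> weyl_b N (Suc i) x"
proof -
  define \<delta> where "\<delta> = 2 * R / x^2"
  have \<delta>: "0 \<le> \<delta>" "\<delta> \<le> 1" unfolding \<delta>_def using R x by (simp_all add: field_simps)
  have "(1 - \<delta>) * real (Suc i) \<le> (1 - \<delta>) * (x^2 + R + 1)"
    using i \<delta> by (intro mult_left_mono) auto
  also have "\<dots> = x^2 + 1 - R - \<delta> * (R + 1)" unfolding \<delta>_def using x by (simp add: field_simps)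
  also have "\<dots> \<le> x^2" using R mult_nonneg_nonneg[OF \<delta>(1), of "R + 1"] by linarith
  finally have "(1 - \<delta>) * real (Suc i) \<le> x^2" .
  moreover have "(1 - \<delta>)^2 * real (Suc i) \<le> (1 - \<delta>) * real (Suc i)"
    using \<delta> by (intro mult_right_mono) (auto simp: power2_eq_square mult_left_le_one_le)
  ultimately have "(1 - \<delta>)^2 * real (Suc i) \<le> x^2" by linarith
  thus ?thesis unfolding \<delta>_def[symmetric] by (rule weyl_b_slow_decay[OF N x \<delta>])
qed

lemma weyl_b_far_le:
  assumes N: "0 \<le> N" and z: "0 < z" "z \<le> Z" and h: "1 \<le> h"
    and far: "z^2 + 2 * h \<le> real i \<or> real i + 2 * h \<le> z^2"
  shows "\<bar>weyl_b N i z\<bar> \<le> sqrt (N * exp (- (h - 1) * (h / (Z^2 + h))))"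
proof -
  have "0 < Z^2 + h" "0 < z^2 + h" using h by (simp_all add: add_nonneg_pos)
  hence "h / (Z^2 + h) \<le> h / (z^2 + h)"
    using z h by (intro divide_left_mono add_right_mono power_mono) auto
  hence "(h - 1) * (h / (Z^2 + h)) \<le> (h - 1) * (h / (z^2 + h))"
    using h by (intro mult_left_mono) auto
  hence "exp (- (h - 1) * (h / (z^2 + h))) \<le> exp (- (h - 1) * (h / (Z^2 + h)))"
    by (simp only: minus_mult_left exp_le_cancel_iff neg_le_iff_le)
  hence mono: "N * exp (- (h - 1) * (h / (z^2 + h))) \<le> N * exp (- (h - 1) * (h / (Z^2 + h)))"
    using N by (rule mult_left_mono)
  have "(weyl_b N i z)^2 = N * pmf (poisson_pmf (z^2)) i" by (rule weyl_b_square[OF N z(1)])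
  also have "\<dots> \<le> N * exp (- (h - 1) * (h / (z^2 + h)))"
    using pmf_poisson_tail[of "z^2" h i] z h far N by (intro mult_left_mono) auto
  finally have "(weyl_b N i z)^2 \<le> N * exp (- (h - 1) * (h / (Z^2 + h)))" using mono by linarith
  hence "sqrt ((weyl_b N i z)^2) \<le> sqrt (N * exp (- (h - 1) * (h / (Z^2 + h))))"
    by (rule real_sqrt_le_mono)
  thus ?thesis by simp
qed

lemma weyl_pair_far_le:
  assumes N: "0 \<le> N" and z: "0 < z" "z \<le> Z" and h: "1 \<le> h"
    and far: "z^2 + 2 * h \<le> real i \<or> real i + 2 * h \<le> z^2"
    and u: "\<bar>u\<bar> \<le> U" "\<bar>v\<bar> \<le> U" and D: "\<bar>real i - z^2\<bar> / z \<le> D"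
  shows "\<bar>weyl_b N i z * u + weyl_c N i z * v\<bar> \<le> sqrt (N * exp (- (h - 1) * (h / (Z^2 + h)))) * U * (1 + D)"
proof -
  have "\<bar>u + v * ((real i - z^2) / z)\<bar> \<le> U + U * D"
  proof -
    have "\<bar>v * ((real i - z^2) / z)\<bar> = \<bar>v\<bar> * (\<bar>real i - z^2\<bar> / z)" using z by (simp add: abs_mult)
    also have "\<dots> \<le> U * D" using u D z by (intro mult_mono) auto
    finally show ?thesis using u abs_triangle_ineq[of u] by linarith
  qed
  hence "\<bar>weyl_b N i z\<bar> * \<bar>u + v * ((real i - z^2) / z)\<bar>
      \<le> sqrt (N * exp (- (h - 1) * (h / (Z^2 + h)))) * (U * (1 + D))"
    using weyl_b_far_le[OF N z h far] N by (intro mult_mono) (auto simp: algebra_simps)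
  moreover have "weyl_b N i z * u + weyl_c N i z * v = weyl_b N i z * (u + v * ((real i - z^2) / z))"
    by (simp add: weyl_c_eq algebra_simps)
  ultimately show ?thesis by (simp add: abs_mult mult.assoc)
qed

lemma weyl_pair_small_beyond_square:
  assumes N: "0 < N" and c1: "0 < c1" and x: "c1 * N \<le> x" "x \<le> c2 * N" and R: "4 \<le> R"
    and u: "\<bar>u0\<bar> \<le> Ub" "\<bar>u1\<bar> \<le> Ub"
    and small: "sqrt (N * exp (- (R/4 - 1) * ((R/4) / ((c2 * N)^2 + R/4)))) * Ub * (1 + (R + 2) / (c1 * N)) \<le> \<tau>"
    and i: "x^2 + R/2 \<le> real i" "real i \<le> x^2 + R + 1"
  shows "\<bar>weyl_b N i x * u0 + weyl_c N i x * u1\<bar> \<le> \<tau>"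
proof -
  have cN: "0 < c1 * N" using N c1 by simp
  hence "\<bar>real i - x^2\<bar> / x \<le> (R + 2) / (c1 * N)"
    using i x R by (intro frac_le) auto
  hence "\<bar>weyl_b N i x * u0 + weyl_c N i x * u1\<bar>
      \<le> sqrt (N * exp (- (R/4 - 1) * ((R/4) / ((c2 * N)^2 + R/4)))) * Ub * (1 + (R + 2) / (c1 * N))"
    by (intro weyl_pair_far_le[where h = "R/4"]) (use cN N x i R u in auto)
  thus ?thesis using small by linarith
qed

lemma far_from_other_square:
  fixes x y a g R :: real
  assumes "0 < a" "a \<le> x" "a \<le> y" "g \<le> \<bar>x - y\<bar>" and i: "x^2 \<le> real i" "real i \<le> x^2 + R + 1"
    and R: "R + 1 \<le> a * g"
  shows "y^2 + a * g \<le> real i \<or> real i + a * g \<le> y^2"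
proof -
  have "y^2 - x^2 = (y - x) * (y + x)" by (simp add: power2_eq_square algebra_simps)
  hence "\<bar>y^2 - x^2\<bar> = \<bar>x - y\<bar> * (y + x)"
    using assms(1-3) by (simp add: abs_mult abs_minus_commute)
  also have "\<dots> \<ge> g * (2 * a)"
    using assms(1-4) by (intro mult_mono) auto
  finally have "2 * (a * g) \<le> \<bar>y^2 - x^2\<bar>" by (simp add: algebra_simps)
  thus ?thesis using i R by (cases "x^2 \<le> y^2") (auto simp: abs_if split: if_splits)
qed

lemma weyl_pair_small_near_other_square:
  assumes N: "1 \<le> N" and c1: "0 < c1" and x: "c1 * N \<le> x" "x \<le> c2 * N"
    and y: "c1 * N \<le> y" "y \<le> c2 * N" "N powr \<epsilon> \<le> \<bar>x - y\<bar>"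
    and u: "\<bar>u\<bar> \<le> Ub" "\<bar>v\<bar> \<le> Ub"
    and R: "0 \<le> R" "R + 2 \<le> c1 * N * N powr \<epsilon>" "1 \<le> c1 * N * N powr \<epsilon> / 2"
    and small: "sqrt (N * exp (- (c1 * N * N powr \<epsilon> / 2 - 1)
        * ((c1 * N * N powr \<epsilon> / 2) / ((c2 * N)^2 + c1 * N * N powr \<epsilon> / 2))))
      * Ub * (1 + (2 * (c2 * N)^2 + R + 2) / (c1 * N)) \<le> \<tau>"
    and i: "x^2 \<le> real i" "real i \<le> x^2 + R + 1"
  shows "\<bar>weyl_b N i y * u + weyl_c N i y * v\<bar> \<le> \<tau>"
proof -
  have cN: "0 < c1 * N" using c1 N by simp
  have far: "y^2 + 2 * (c1 * N * N powr \<epsilon> / 2) \<le> real i \<or> real i + 2 * (c1 * N * N powr \<epsilon> / 2) \<le> y^2"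
    using far_from_other_square[OF cN x(1) y(1,3) i] R by simp
  have "x^2 \<le> (c2 * N)^2" "y^2 \<le> (c2 * N)^2" using x y cN by (auto intro!: power_mono)
  hence "\<bar>real i - y^2\<bar> \<le> 2 * (c2 * N)^2 + R + 2"
    unfolding abs_le_iff using i R zero_le_power2[of y] zero_le_power2[of x] by (intro conjI; linarith)
  hence "\<bar>real i - y^2\<bar> / y \<le> (2 * (c2 * N)^2 + R + 2) / (c1 * N)"
    using y cN by (intro frac_le) auto
  hence "\<bar>weyl_b N i y * u + weyl_c N i y * v\<bar>
      \<le> sqrt (N * exp (- (c1 * N * N powr \<epsilon> / 2 - 1)
        * ((c1 * N * N powr \<epsilon> / 2) / ((c2 * N)^2 + c1 * N * N powr \<epsilon> / 2))))
      * Ub * (1 + (2 * (c2 * N)^2 + R + 2) / (c1 * N))"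
    using N cN y(1) by (intro weyl_pair_far_le[OF _ _ y(2) R(3) far u]) auto
  thus ?thesis using small by linarith
qed

lemma affine_large_at_one_of_two:
  fixes u0 u1 e d :: real
  assumes e: "0 \<le> e" "e \<le> 1/8" and d: "1/4 \<le> d"
  shows "sqrt (u0^2 + u1^2) / 16 \<le> \<bar>u0 + u1 * e\<bar> \<or> sqrt (u0^2 + u1^2) / 16 \<le> \<bar>u0 + u1 * (e + d)\<bar>"
proof (cases "sqrt (u0^2 + u1^2) / 16 \<le> \<bar>u0 + u1 * e\<bar>")
  case small: False
  let ?U = "sqrt (u0^2 + u1^2)"
  have "\<bar>u1 * e\<bar> \<le> \<bar>u1\<bar> / 8" using mult_left_mono[OF e(2), of "\<bar>u1\<bar>"] e(1) by (simp add: abs_mult)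
  hence "\<bar>u0\<bar> < ?U / 16 + \<bar>u1\<bar> / 8" using small by linarith
  hence "?U / 2 \<le> \<bar>u1\<bar>" using sqrt_sum_squares_le_sum_abs[of u0 u1] by linarith
  moreover have "\<bar>u1\<bar> / 4 \<le> \<bar>u1 * d\<bar>" using mult_left_mono[OF d, of "\<bar>u1\<bar>"] d by (simp add: abs_mult)
  moreover have "\<bar>u1 * d\<bar> \<le> \<bar>u0 + u1 * (e + d)\<bar> + \<bar>u0 + u1 * e\<bar>"
    using abs_triangle_ineq4[of "u0 + u1 * (e + d)" "u0 + u1 * e"] by (simp add: algebra_simps)
  ultimately show ?thesis using small by linarith
qed simp

lemma weyl_pair_large_near_mode:
  assumes N: "0 \<le> N" and x: "8 \<le> x"
  obtains i where "i = nat \<lceil>x^2\<rceil> \<or> i = nat \<lceil>x^2\<rceil> + nat \<lceil>x/4\<rceil>"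
    and "N * (u0^2 + u1^2) / (512 * exp 2 * sqrt (real (nat \<lceil>x^2\<rceil>)))
           \<le> (weyl_b N i x * u0 + weyl_c N i x * u1)^2"
proof -
  define a m where "a = nat \<lceil>x^2\<rceil>" and "m = nat \<lceil>x/4\<rceil>"
  define L where "L i = u0 + u1 * ((real i - x^2) / x)" for i
  have x0: "0 < x" using x by simp
  have pair: "weyl_b N i x * u0 + weyl_c N i x * u1 = weyl_b N i x * L i" for i
    unfolding L_def by (simp add: weyl_c_eq algebra_simps)
  have mode: "N / (exp 2 * sqrt (real a)) / 2 \<le> (weyl_b N i x)^2" if "i = a \<or> i = a + m" for i
  proof -
    have "N * (1 / (exp 2 * sqrt (real a))) \<le> N * pmf (poisson_pmf (x^2)) a"
      unfolding a_def using x N by (intro mult_left_mono pmf_poisson_ceiling_ge) (auto simp: one_le_power)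
    moreover have "N * pmf (poisson_pmf (x^2)) a / 2 \<le> N * pmf (poisson_pmf (x^2)) (a + m)"
      using mult_left_mono[OF pmf_poisson_shift_ge_half[OF x] N] unfolding a_def m_def by simp
    moreover have "0 \<le> N / (exp 2 * sqrt (real a))" using N by simp
    ultimately show ?thesis
      using that weyl_b_square[OF N x0] by auto
  qed
  have "0 \<le> (real a - x^2) / x" "(real a - x^2) / x \<le> 1/8" "1/4 \<le> real m / x"
    unfolding a_def m_def using x by (auto simp: field_simps) linarith+
  moreover have "L (a + m) = u0 + u1 * ((real a - x^2) / x + real m / x)"
    unfolding L_def using x0 by (simp add: field_simps)
  ultimately have "sqrt (u0^2 + u1^2) / 16 \<le> \<bar>L a\<bar> \<or> sqrt (u0^2 + u1^2) / 16 \<le> \<bar>L (a + m)\<bar>"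
    using affine_large_at_one_of_two[of "(real a - x^2) / x" "real m / x" u0 u1] by (simp add: L_def)
  then obtain i where i: "i = a \<or> i = a + m" and Li: "sqrt (u0^2 + u1^2) / 16 \<le> \<bar>L i\<bar>"
    by blast
  have "N * (u0^2 + u1^2) / (512 * exp 2 * sqrt (real a))
      = (N / (exp 2 * sqrt (real a)) / 2) * (sqrt (u0^2 + u1^2) / 16)^2"
    by (simp add: power_divide field_simps)
  also have "\<dots> \<le> (weyl_b N i x)^2 * (L i)^2"
  proof (rule mult_mono)
    have "(sqrt (u0^2 + u1^2) / 16)^2 \<le> \<bar>L i\<bar>^2" using Li by (intro power_mono) auto
    thus "(sqrt (u0^2 + u1^2) / 16)^2 \<le> (L i)^2" by simp
  qed (use mode[OF i] in auto)
  finally show ?thesis using that[OF i[unfolded a_def m_def]] pair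
    unfolding a_def by (simp add: power_mult_distrib)
qed

lemma weyl_pair_large_near_square:
  assumes N: "1 \<le> N" and c2: "0 \<le> c2" and x: "8 \<le> x" "x \<le> c2 * N"
    and u: "2048 * exp 2 * (c2 + 1) * \<tau>^2 \<le> u0^2 + u1^2" and \<tau>: "0 < \<tau>"
  obtains i where "nat \<lceil>x^2\<rceil> \<le> i" "i \<le> nat \<lceil>x^2\<rceil> + nat \<lceil>x/4\<rceil>"
    and "2 * \<tau> \<le> \<bar>weyl_b N i x * u0 + weyl_c N i x * u1\<bar>"
proof -
  define a where "a = nat \<lceil>x^2\<rceil>"
  obtain i where i: "i = a \<or> i = a + nat \<lceil>x/4\<rceil>"
    and big: "N * (u0^2 + u1^2) / (512 * exp 2 * sqrt (real a)) \<le> (weyl_b N i x * u0 + weyl_c N i x * u1)^2"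
    using weyl_pair_large_near_mode[OF _ x(1), of N u0 u1] N unfolding a_def by auto
  have a2: "x^2 \<le> real a" "real a \<le> x^2 + 1"
    unfolding a_def using ceiling_correct[of "x^2"] zero_le_power2[of x] by auto
  have "64 \<le> x^2" using power_mono[OF x(1), of 2] by simp
  hence a: "0 < sqrt (real a)" "real a \<le> (x + 1)^2"
    using a2 x by (auto simp: power2_eq_square algebra_simps)
  hence "sqrt (real a) \<le> (c2 + 1) * N" using real_sqrt_le_mono[OF a(2)] x N by (simp add: algebra_simps)
  hence "N * (u0^2 + u1^2) / (512 * exp 2 * ((c2 + 1) * N))
      \<le> N * (u0^2 + u1^2) / (512 * exp 2 * sqrt (real a))"
    using a N c2 by (intro divide_left_mono mult_pos_pos) auto
  also have "N * (u0^2 + u1^2) / (512 * exp 2 * ((c2 + 1) * N)) = (u0^2 + u1^2) / (512 * exp 2 * (c2 + 1))"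
    using N by simp
  finally have "(u0^2 + u1^2) / (512 * exp 2 * (c2 + 1)) \<le> (weyl_b N i x * u0 + weyl_c N i x * u1)^2"
    using big by linarith
  moreover have "(2 * \<tau>)^2 \<le> (u0^2 + u1^2) / (512 * exp 2 * (c2 + 1))"
    using u c2 by (simp add: pos_le_divide_eq add_pos_nonneg power_mult_distrib mult_ac)
  ultimately have "\<bar>2 * \<tau>\<bar> \<le> \<bar>weyl_b N i x * u0 + weyl_c N i x * u1\<bar>"
    unfolding abs_le_square_iff by linarith
  hence "2 * \<tau> \<le> \<bar>weyl_b N i x * u0 + weyl_c N i x * u1\<bar>" using \<tau> by simp
  moreover have "a \<le> i" "i \<le> a + nat \<lceil>x/4\<rceil>" using i by auto
  ultimately show ?thesis using that unfolding a_def by blast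
qed

text \<open>The window of indices is [x^2, x^2 + R]. At its left end the Poisson weight is near its
  mode, of order 1/x; at its right end it is negligible; and from one index to the next it
  decays at most by the factor 1 - 2R/x^2, so over x^2/(16R) steps it stays comparable.
  The perturbation e is the contribution of the second point in dimension 4.\<close>
lemma weyl_cos_sum_ge:
  fixes e :: "nat \<Rightarrow> real"
  assumes N: "1 \<le> N" and c: "0 < c1" "c1 \<le> c2"
    and x: "c1 * N \<le> x" "x \<le> c2 * N" "8 \<le> c1 * N"
    and n: "(c2 * N)^2 + R + 1 \<le> real n"
    and \<tau>: "0 < \<tau>" "\<tau> \<le> 1"
    and u: "2048 * exp 2 * (c2 + 1) * \<tau>^2 \<le> u0^2 + u1^2" "\<bar>u0\<bar> \<le> Ub" "\<bar>u1\<bar> \<le> Ub"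
    and R: "4 \<le> R" "16 * R \<le> (c1 * N)^2" "c2 * N / 4 + 2 \<le> R" "1 + (c2 * N)^2 / (8 * R) \<le> R / 2"
    and tail: "sqrt (N * exp (- (R/4 - 1) * ((R/4) / ((c2 * N)^2 + R/4)))) * Ub * (1 + (R + 2) / (c1 * N)) \<le> \<tau> / 2"
    and e: "\<And>i. x^2 \<le> real i \<Longrightarrow> real i \<le> x^2 + R + 1 \<Longrightarrow> \<bar>e i\<bar> \<le> \<tau> / 20"
  shows "((c1 * N)^2 / (16 * R) - 1) * \<tau>^2 / 500
    \<le> (\<Sum>i\<in>{1..n}. 1 - cos (weyl_b N i x * u0 + weyl_c N i x * u1 + e i))"
proof -
  define t where "t i = weyl_b N i x * u0 + weyl_c N i x * u1 + e i" for i
  define \<beta> where "\<beta> i = weyl_b N i x" for i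
  define L where "L i = (u0 - u1 * x) + (u1 / x) * real i" for i
  define a where "a = nat \<lceil>x^2\<rceil>"
  define r where "r = nat \<lfloor>R\<rfloor>"
  define T where "T = nat \<lfloor>x^2 / (16 * R)\<rfloor>"
  define \<delta> where "\<delta> = 2 * R / x^2"
  have x0: "0 < x" and x8: "8 \<le> x" using x c N by (smt (verit) mult_pos_pos)+
  have x2: "(c1 * N)^2 \<le> x^2" "x^2 \<le> (c2 * N)^2" using x x0 c N by (auto intro!: power_mono)
  have a: "x^2 \<le> real a" "real a \<le> x^2 + 1"
    unfolding a_def using ceiling_correct[of "x^2"] zero_le_power2[of x] by auto
  have r: "R - 1 \<le> real r" "real r \<le> R" unfolding r_def using R by linarith+
  have "0 \<le> x^2 / (16 * R)" using R by simp
  hence T: "x^2 / (16 * R) - 1 \<le> real T" "real T \<le> x^2 / (16 * R)" unfolding T_def by linarith+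
  have "x^2 / (16 * R) \<le> (c2 * N)^2 / (16 * R)" using x2 R by (intro divide_right_mono) auto
  hence T_le: "2 * real T \<le> R / 2 - 1" using T R(4) by simp
  have window: "x^2 \<le> real i \<and> real i \<le> x^2 + R + 1" if "a \<le> i" "i \<le> a + r" for i
    using that a r by (smt (verit) of_nat_add of_nat_le_iff)
  have \<beta>L: "\<beta> i * L i = weyl_b N i x * u0 + weyl_c N i x * u1" for i
    unfolding \<beta>_def L_def using x0 by (simp add: weyl_c_eq field_simps power2_eq_square)
  have close: "\<bar>t i - \<beta> i * L i\<bar> \<le> \<tau> / 20" if "a \<le> i" "i \<le> a + r" for i
    using e window[OF that] unfolding t_def \<beta>L by simp
  obtain i0 where i0a: "a \<le> i0" and i0m: "i0 \<le> a + nat \<lceil>x/4\<rceil>"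
    and big: "2 * \<tau> \<le> \<bar>\<beta> i0 * L i0\<bar>"
    using weyl_pair_large_near_square[OF N _ x8 x(2) u(1) \<tau>(1)] c unfolding \<beta>L a_def by auto
  have "nat \<lceil>x/4\<rceil> \<le> r" using x R(3) r by linarith
  hence i0: "a \<le> i0" "i0 \<le> a + r" using i0a i0m by linarith+
  have large: "\<tau> \<le> \<bar>t i0\<bar>" using close[OF i0] big \<tau> by linarith
  have small: "\<bar>t i\<bar> < \<tau>" if "a + r \<le> i + 2 * T" "i \<le> a + r" for i
  proof -
    have "x^2 + R/2 \<le> real i" using that a r T_le by linarith
    moreover have "real i \<le> x^2 + R + 1" using window[of i] that T_le r by linarith
    ultimately have "\<bar>\<beta> i * L i\<bar> \<le> \<tau> / 2"
      unfolding \<beta>L using weyl_pair_small_beyond_square[OF _ c(1) x(1,2) R(1) u(2,3) tail] N by simp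
    thus ?thesis using close[of i] that T_le r \<tau> by linarith
  qed
  have \<delta>: "0 \<le> \<delta>" "\<delta> \<le> 1" "8 * real T * \<delta> \<le> 1"
  proof -
    show "0 \<le> \<delta>" unfolding \<delta>_def using R by simp
    show "\<delta> \<le> 1" unfolding \<delta>_def using R(1,2) x2 x0 by (simp add: field_simps)
    have "8 * real T * \<delta> \<le> 8 * (x^2 / (16 * R)) * \<delta>" using T \<open>0 \<le> \<delta>\<close> by (intro mult_right_mono) auto
    also have "\<dots> = 1" unfolding \<delta>_def using x0 R by (simp add: field_simps)
    finally show "8 * real T * \<delta> \<le> 1" .
  qed
  have ratio: "(1 - \<delta>) * \<beta> i \<le> \<beta> (Suc i)" if "a \<le> i" "i < a + r" for i
    unfolding \<beta>_def \<delta>_def using window[of "Suc i"] that R(1,2) x2 x0 N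
    by (intro weyl_b_decay_near_square) auto
  have "real T * \<tau>^2 / 500 \<le> (\<Sum>i\<in>{a..a+r}. 1 - cos (t i))"
    by (rule sum_one_minus_cos_window_ge[OF _ ratio \<delta> L_def \<tau> close i0 large small])
       (use N x0 in \<open>auto simp: \<beta>_def weyl_b_nonneg\<close>)
  also have "\<dots> \<le> (\<Sum>i\<in>{1..n}. 1 - cos (t i))"
  proof (rule sum_mono2)
    have "real (a + r) \<le> real n" using a r x2 n by simp
    moreover have "64 \<le> x^2" using power_mono[OF x8, of 2] by simp
    hence "1 \<le> a" using a by simp
    ultimately show "{a..a+r} \<subseteq> {1..n}" by auto
  qed auto
  finally have "real T * \<tau>^2 / 500 \<le> (\<Sum>i\<in>{1..n}. 1 - cos (t i))" .
  moreover have "((c1 * N)^2 / (16 * R) - 1) * \<tau>^2 \<le> real T * \<tau>^2"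
  proof (rule mult_right_mono)
    have "(c1 * N)^2 / (16 * R) \<le> x^2 / (16 * R)" using x2 R by (intro divide_right_mono) auto
    thus "(c1 * N)^2 / (16 * R) - 1 \<le> real T" using T by linarith
  qed simp
  ultimately show ?thesis unfolding t_def by simp
qed

text \<open>For d = 4 the step vector consists of a pair at x and a pair at y. The pair carrying at
  least half of the squared norm of \<sigma> \<eta> produces the sum; the other one only perturbs it,
  its Poisson weights being evaluated far from their mode.\<close>
lemma weyl_cos_sum_ge_vector:
  fixes \<eta> :: "nat \<Rightarrow> real"
  assumes d: "d \<in> {1, 2, 4}" and N: "1 \<le> N" and c: "0 < c1" "c1 \<le> c2"
    and x: "c1 * N \<le> x" "x \<le> c2 * N" "8 \<le> c1 * N"
    and y: "d = 4 \<longrightarrow> c1 * N \<le> y \<and> y \<le> c2 * N \<and> N powr \<epsilon> \<le> \<bar>x - y\<bar>"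
    and n: "(c2 + 1) * N \<le> sqrt (real n)"
    and \<tau>: "0 < \<tau>" "\<tau> \<le> 1"
    and \<eta>: "4096 * exp 2 * (c2 + 1) * \<tau>^2 \<le> \<sigma>^2 * (\<Sum>j<d. (\<eta> j)^2)"
      "sqrt (\<sigma>^2 * (\<Sum>j<d. (\<eta> j)^2)) \<le> Ub"
    and R: "4 \<le> R" "16 * R \<le> (c1 * N)^2" "R + 2 \<le> N^2" "c2 * N / 4 + 2 \<le> R"
      "1 + (c2 * N)^2 / (8 * R) \<le> R / 2"
    and tail: "sqrt (N * exp (- (R/4 - 1) * ((R/4) / ((c2 * N)^2 + R/4)))) * Ub * (1 + (R + 2) / (c1 * N)) \<le> \<tau> / 2"
    and sep: "R + 2 \<le> c1 * N * N powr \<epsilon>" "1 \<le> c1 * N * N powr \<epsilon> / 2"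
      "sqrt (N * exp (- (c1 * N * N powr \<epsilon> / 2 - 1)
        * ((c1 * N * N powr \<epsilon> / 2) / ((c2 * N)^2 + c1 * N * N powr \<epsilon> / 2))))
      * Ub * (1 + (2 * (c2 * N)^2 + R + 2) / (c1 * N)) \<le> \<tau> / 20"
  shows "((c1 * N)^2 / (16 * R) - 1) * \<tau>^2 / 500
    \<le> (\<Sum>i\<in>{1..n}. 1 - cos (\<sigma> * (\<Sum>j<d. weyl_w N x y i j * \<eta> j)))"
proof -
  define u where "u k = (if k < d then \<sigma> * \<eta> k else 0)" for k
  have w: "\<sigma> * (\<Sum>j<d. weyl_w N x y i j * \<eta> j)
      = (weyl_b N i x * u 0 + weyl_c N i x * u 1) + (weyl_b N i y * u 2 + weyl_c N i y * u 3)" for i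
    using d by (auto simp: u_def weyl_w_def eval_nat_numeral algebra_simps)
  have norm_u: "(u 0)^2 + (u 1)^2 + (u 2)^2 + (u 3)^2 = \<sigma>^2 * (\<Sum>j<d. (\<eta> j)^2)"
    using d by (auto simp: u_def eval_nat_numeral algebra_simps power_mult_distrib)
  have u_le: "\<bar>u k\<bar> \<le> Ub" if "k \<in> {0, 1, 2, 3}" for k
  proof -
    have "(u k)^2 \<le> (u 0)^2 + (u 1)^2 + (u 2)^2 + (u 3)^2"
      using that zero_le_power2[of "u 0"] zero_le_power2[of "u 1"] zero_le_power2[of "u 2"]
        zero_le_power2[of "u 3"] by auto
    hence "\<bar>u k\<bar> \<le> sqrt (\<sigma>^2 * (\<Sum>j<d. (\<eta> j)^2))" unfolding norm_u[symmetric] by (simp add: real_le_rsqrt)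
    thus ?thesis using \<eta>(2) by linarith
  qed
  hence u: "\<bar>u 0\<bar> \<le> Ub" "\<bar>u 1\<bar> \<le> Ub" "\<bar>u 2\<bar> \<le> Ub" "\<bar>u 3\<bar> \<le> Ub" by auto
  have y_off: "u 2 = 0 \<and> u 3 = 0" if "d \<noteq> 4" using that d by (auto simp: u_def)
  have R0: "0 \<le> R" using R by simp
  have "((c2 + 1) * N)^2 \<le> (sqrt (real n))^2" using n c N by (intro power_mono) auto
  moreover have "(c2 * N)^2 + N^2 \<le> ((c2 + 1) * N)^2" using c N by (simp add: power2_eq_square algebra_simps)
  ultimately have n': "(c2 * N)^2 + R + 1 \<le> real n" using R(3) by simp
  consider "2048 * exp 2 * (c2 + 1) * \<tau>^2 \<le> (u 0)^2 + (u 1)^2"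
    | "2048 * exp 2 * (c2 + 1) * \<tau>^2 \<le> (u 2)^2 + (u 3)^2" using \<eta>(1) unfolding norm_u[symmetric] by linarith
  thus ?thesis
  proof cases
    case 1
    have "\<bar>weyl_b N i y * u 2 + weyl_c N i y * u 3\<bar> \<le> \<tau> / 20" if "x^2 \<le> real i" "real i \<le> x^2 + R + 1" for i
    proof (cases "d = 4")
      case True
      thus ?thesis using y weyl_pair_small_near_other_square[OF N c(1) x(1,2) _ _ _ u(3,4) R0 sep that]
        by simp
    qed (use y_off \<tau> in simp)
    thus ?thesis unfolding w
      by (intro weyl_cos_sum_ge[OF N c x n' \<tau> 1 u(1,2) R(1,2,4,5) tail]) auto
  next
    case 2
    moreover have "0 < 2048 * exp 2 * (c2 + 1) * \<tau>^2" using c \<tau> by (simp add: add_pos_pos)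
    ultimately have "d = 4" using y_off by fastforce
    hence y': "c1 * N \<le> y" "y \<le> c2 * N" "N powr \<epsilon> \<le> \<bar>y - x\<bar>" using y by (auto simp: abs_minus_commute)
    have "\<bar>weyl_b N i x * u 0 + weyl_c N i x * u 1\<bar> \<le> \<tau> / 20" if "y^2 \<le> real i" "real i \<le> y^2 + R + 1" for i
      using weyl_pair_small_near_other_square[OF N c(1) y'(1,2) x(1,2) y'(3) u(1,2) R0 sep that] by simp
    hence "((c1 * N)^2 / (16 * R) - 1) * \<tau>^2 / 500
      \<le> (\<Sum>i\<in>{1..n}. 1 - cos ((weyl_b N i y * u 2 + weyl_c N i y * u 3) + (weyl_b N i x * u 0 + weyl_c N i x * u 1)))"
      by (intro weyl_cos_sum_ge[OF N c y'(1,2) x(3) n' \<tau> 2 u(3,4) R(1,2,4,5) tail]) auto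
    thus ?thesis unfolding w by (simp add: add_ac)
  qed
qed

section \<open>Characteristic functions\<close>

lemma prod_le_exp_neg_sum:
  fixes f :: "'i \<Rightarrow> real"
  assumes "finite S" "\<And>i. i \<in> S \<Longrightarrow> 0 \<le> f i"
  shows "(\<Prod>i\<in>S. f i) \<le> exp (- (\<Sum>i\<in>S. 1 - f i))"
proof -
  have "(\<Prod>i\<in>S. f i) \<le> (\<Prod>i\<in>S. exp (- (1 - f i)))"
  proof (rule prod_mono)
    fix i assume "i \<in> S"
    thus "0 \<le> f i \<and> f i \<le> exp (- (1 - f i))" using assms(2) exp_ge_add_one_self[of "f i - 1"] by simp
  qed
  also have "\<dots> = exp (\<Sum>i\<in>S. - (1 - f i))" using assms(1) by (simp only: exp_sum)
  also have "\<dots> = exp (- (\<Sum>i\<in>S. 1 - f i))" by (simp only: sum_negf)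
  finally show ?thesis .
qed

lemma norm_char_eq_integral_cos:
  assumes "prob_space M" and \<xi>: "\<xi> \<in> borel_measurable M"
  obtains \<theta> where "cmod (\<integral>\<omega>. exp (\<i> * complex_of_real (\<xi> \<omega> * t)) \<partial>M) = (\<integral>\<omega>. cos (\<xi> \<omega> * t - \<theta>) \<partial>M)"
    and "integrable M (\<lambda>\<omega>. cos (\<xi> \<omega> * t - \<theta>))"
proof -
  interpret prob_space M by fact
  define z where "z = (\<integral>\<omega>. exp (\<i> * complex_of_real (\<xi> \<omega> * t)) \<partial>M)"
  define \<theta> where "\<theta> = Arg z"
  define f where "f \<omega> = cis (- \<theta>) * exp (\<i> * complex_of_real (\<xi> \<omega> * t))" for \<omega>
  have "(\<lambda>s. cis (- \<theta>) * exp (\<i> * complex_of_real (s * t))) \<in> borel_measurable borel"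
    by (intro borel_measurable_continuous_onI continuous_intros)
  hence "f \<in> borel_measurable M" unfolding f_def using measurable_compose[OF \<xi>] by blast
  hence f: "integrable M f" by (intro integrable_const_bound[where B = 1]) (auto simp: f_def norm_mult)
  have Re_f: "Re (f \<omega>) = cos (\<xi> \<omega> * t - \<theta>)" for \<omega>
  proof -
    have "exp (\<i> * complex_of_real (\<xi> \<omega> * t)) = cis (\<xi> \<omega> * t)" by (simp add: cis_conv_exp)
    thus ?thesis unfolding f_def by (simp add: cis_mult)
  qed
  have "z = complex_of_real (cmod z) * cis \<theta>" unfolding \<theta>_def by (metis rcis_cmod_Arg rcis_def)
  hence "cis (- \<theta>) * z = complex_of_real (cmod z) * (cis (- \<theta>) * cis \<theta>)" by (metis mult.left_commute)
  hence "cmod z = Re (cis (- \<theta>) * z)" by (simp add: cis_mult)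
  also have "\<dots> = Re (\<integral>\<omega>. f \<omega> \<partial>M)" unfolding z_def f_def by simp
  also have "\<dots> = (\<integral>\<omega>. cos (\<xi> \<omega> * t - \<theta>) \<partial>M)" by (simp add: integral_Re[OF f, symmetric] Re_f)
  finally show ?thesis using that integrable_Re[OF f] unfolding z_def Re_f by blast
qed

text \<open>Symmetrisation: for s1 \<in> {a1..b1} and s2 \<in> {-b2..-a2} the difference s1 - s2 lies in
  the range where the sum is known to be large.\<close>
lemma one_side_sum_one_minus_cos_ge:
  fixes t \<theta> :: "'i \<Rightarrow> real"
  assumes G: "\<And>\<sigma>. a1 + a2 \<le> \<sigma> \<Longrightarrow> \<sigma> \<le> b1 + b2 \<Longrightarrow> 4 * \<Lambda> \<le> (\<Sum>i\<in>S. 1 - cos (\<sigma> * t i))"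
  shows "(\<forall>s\<in>{a1..b1}. \<Lambda> \<le> (\<Sum>i\<in>S. 1 - cos (s * t i - \<theta> i)))
    \<or> (\<forall>s\<in>{-b2..-a2}. \<Lambda> \<le> (\<Sum>i\<in>S. 1 - cos (s * t i - \<theta> i)))"
proof (rule ccontr)
  define H where "H s = (\<Sum>i\<in>S. 1 - cos (s * t i - \<theta> i))" for s
  assume "\<not> ?thesis"
  hence "\<not> ((\<forall>s\<in>{a1..b1}. \<Lambda> \<le> H s) \<or> (\<forall>s\<in>{-b2..-a2}. \<Lambda> \<le> H s))" unfolding H_def .
  then obtain s1 s2 where s1: "s1 \<in> {a1..b1}" "H s1 < \<Lambda>" and s2: "s2 \<in> {-b2..-a2}" "H s2 < \<Lambda>"
    by (auto simp: not_le)
  have "4 * \<Lambda> \<le> (\<Sum>i\<in>S. 1 - cos ((s1 - s2) * t i))" using G[of "s1 - s2"] s1 s2 by simp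
  also have "\<dots> \<le> (\<Sum>i\<in>S. 2 * (1 - cos (s1 * t i - \<theta> i)) + 2 * (1 - cos (s2 * t i - \<theta> i)))"
  proof (rule sum_mono)
    fix i
    have "(s1 - s2) * t i = (s1 * t i - \<theta> i) - (s2 * t i - \<theta> i)" by (simp add: algebra_simps)
    thus "1 - cos ((s1 - s2) * t i) \<le> 2 * (1 - cos (s1 * t i - \<theta> i)) + 2 * (1 - cos (s2 * t i - \<theta> i))"
      using one_minus_cos_diff_le by presburger
  qed
  also have "\<dots> = 2 * H s1 + 2 * H s2" unfolding H_def by (simp only: sum.distrib sum_distrib_left)
  finally show False using s1 s2 by linarith
qed

lemma integral_ge_on_interval:
  fixes H :: "real \<Rightarrow> real"
  assumes "prob_space M" and \<xi>: "\<xi> \<in> borel_measurable M" and H: "integrable M (\<lambda>\<omega>. H (\<xi> \<omega>))"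
    and H0: "\<And>s. 0 \<le> H s" and \<Lambda>: "0 \<le> \<Lambda>" and HI: "\<forall>s\<in>{lo..hi}. \<Lambda> \<le> H s"
    and p: "p \<le> measure M {\<omega>\<in>space M. lo \<le> \<xi> \<omega> \<and> \<xi> \<omega> \<le> hi}"
  shows "p * \<Lambda> \<le> (\<integral>\<omega>. H (\<xi> \<omega>) \<partial>M)"
proof -
  interpret prob_space M by fact
  define A where "A = {\<omega>\<in>space M. lo \<le> \<xi> \<omega> \<and> \<xi> \<omega> \<le> hi}"
  have A: "A \<in> sets M" unfolding A_def using \<xi> by measurable
  have "p * \<Lambda> \<le> measure M A * \<Lambda>" using p \<Lambda> unfolding A_def by (rule mult_right_mono)
  also have "\<dots> = (\<integral>\<omega>. \<Lambda> * indicator A \<omega> \<partial>M)"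
    using A sets.sets_into_space[OF A] by (simp add: Int_absorb2)
  also have "\<dots> \<le> (\<integral>\<omega>. H (\<xi> \<omega>) \<partial>M)"
  proof (rule integral_mono[OF _ H])
    show "integrable M (\<lambda>\<omega>. \<Lambda> * indicator A \<omega>)"
      using emeasure_finite[of A] by (intro integrable_mult_right integrable_real_indicator[OF A]) (simp add: less_top[symmetric])
    show "\<Lambda> * indicator A \<omega> \<le> H (\<xi> \<omega>)" for \<omega>
      using HI H0 unfolding A_def by (auto simp: indicator_def)
  qed
  finally show ?thesis .
qed

lemma prod_norm_char_le_exp:
  fixes \<xi> :: "'a \<Rightarrow> real" and t :: "'i \<Rightarrow> real"
  assumes M: "prob_space M" and \<xi>: "\<xi> \<in> borel_measurable M" and S: "finite S"
    and p: "p \<le> measure M {\<omega>\<in>space M. a1 \<le> \<xi> \<omega> \<and> \<xi> \<omega> \<le> b1}"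
      "p \<le> measure M {\<omega>\<in>space M. -b2 \<le> \<xi> \<omega> \<and> \<xi> \<omega> \<le> -a2}"
    and \<Lambda>: "0 \<le> \<Lambda>"
    and G: "\<And>\<sigma>. a1 + a2 \<le> \<sigma> \<Longrightarrow> \<sigma> \<le> b1 + b2 \<Longrightarrow> 4 * \<Lambda> \<le> (\<Sum>i\<in>S. 1 - cos (\<sigma> * t i))"
  shows "(\<Prod>i\<in>S. cmod (\<integral>\<omega>. exp (\<i> * complex_of_real (\<xi> \<omega> * t i)) \<partial>M)) \<le> exp (- (p * \<Lambda>))"
proof -
  interpret prob_space M by fact
  define \<phi> where "\<phi> i = cmod (\<integral>\<omega>. exp (\<i> * complex_of_real (\<xi> \<omega> * t i)) \<partial>M)" for i
  have "\<forall>i. \<exists>\<theta>. \<phi> i = (\<integral>\<omega>. cos (\<xi> \<omega> * t i - \<theta>) \<partial>M) \<and> integrable M (\<lambda>\<omega>. cos (\<xi> \<omega> * t i - \<theta>))"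
    using norm_char_eq_integral_cos[OF M \<xi>] unfolding \<phi>_def by blast
  then obtain \<theta> where \<theta>: "\<And>i. \<phi> i = (\<integral>\<omega>. cos (\<xi> \<omega> * t i - \<theta> i) \<partial>M)"
    and int_cos: "\<And>i. integrable M (\<lambda>\<omega>. cos (\<xi> \<omega> * t i - \<theta> i))"
    by metis
  define H where "H s = (\<Sum>i\<in>S. 1 - cos (s * t i - \<theta> i))" for s
  have H0: "0 \<le> H s" for s unfolding H_def by (intro sum_nonneg) auto
  have int_H: "integrable M (\<lambda>\<omega>. H (\<xi> \<omega>))" unfolding H_def using int_cos by auto
  have "(\<Sum>i\<in>S. 1 - \<phi> i) = (\<integral>\<omega>. H (\<xi> \<omega>) \<partial>M)"
    unfolding H_def \<theta> using int_cos prob_space by (simp add: Bochner_Integration.integral_sum)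
  also have "p * \<Lambda> \<le> \<dots>"
    using one_side_sum_one_minus_cos_ge[OF G, where \<theta> = \<theta>, folded H_def]
      integral_ge_on_interval[OF M \<xi> int_H H0 \<Lambda> _ p(1)] integral_ge_on_interval[OF M \<xi> int_H H0 \<Lambda> _ p(2)]
    by blast
  finally have "p * \<Lambda> \<le> (\<Sum>i\<in>S. 1 - \<phi> i)" .
  hence "exp (- (\<Sum>i\<in>S. 1 - \<phi> i)) \<le> exp (- (p * \<Lambda>))" by simp
  moreover have "(\<Prod>i\<in>S. \<phi> i) \<le> exp (- (\<Sum>i\<in>S. 1 - \<phi> i))"
    using S by (intro prod_le_exp_neg_sum) (auto simp: \<phi>_def)
  ultimately show ?thesis unfolding \<phi>_def by linarith
qed

lemma measure_pos_gt_0_of_mean_zero: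
  fixes f :: "'a \<Rightarrow> real"
  assumes "prob_space M" and f: "f \<in> borel_measurable M" "integrable M f"
    and mean: "(\<integral>\<omega>. f \<omega> \<partial>M) = 0" and var: "(\<integral>\<omega>. (f \<omega>)^2 \<partial>M) \<noteq> 0"
  shows "0 < measure M {\<omega>\<in>space M. 0 < f \<omega>}"
proof (rule ccontr)
  interpret prob_space M by fact
  assume "\<not> ?thesis"
  hence "measure M {\<omega>\<in>space M. 0 < f \<omega>} = 0" using measure_nonneg[of M] by (meson not_le order_antisym)
  moreover have "{\<omega>\<in>space M. 0 < f \<omega>} \<in> sets M" using f by measurable
  ultimately have "AE \<omega> in M. 0 \<le> - f \<omega>"
    by (subst AE_iff_measurable[of "{\<omega>\<in>space M. 0 < f \<omega>}"]) (auto simp: not_le emeasure_eq_measure)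
  hence "AE \<omega> in M. - f \<omega> = 0"
    using integral_nonneg_eq_0_iff_AE[of M "\<lambda>\<omega>. - f \<omega>"] f mean by auto
  hence "(\<integral>\<omega>. (f \<omega>)^2 \<partial>M) = (\<integral>\<omega>. 0 \<partial>M)" by (intro integral_cong_AE) (use f in auto)
  thus False using var by simp
qed

lemma measure_interval_gt_0:
  fixes f :: "'a \<Rightarrow> real"
  assumes "prob_space M" and f: "f \<in> borel_measurable M" and pos: "0 < measure M {\<omega>\<in>space M. 0 < f \<omega>}"
  obtains a b where "0 < a" "a \<le> b" "0 < measure M {\<omega>\<in>space M. a \<le> f \<omega> \<and> f \<omega> \<le> b}"
proof -
  interpret prob_space M by fact
  define B where "B k = {\<omega>\<in>space M. 1 / real (Suc k) \<le> f \<omega> \<and> f \<omega> \<le> real (Suc k)}" for k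
  have B: "B k \<in> sets M" for k unfolding B_def using f by measurable
  have "{\<omega>\<in>space M. 0 < f \<omega>} \<subseteq> (\<Union>k. B k)"
  proof
    fix \<omega> assume \<omega>: "\<omega> \<in> {\<omega>\<in>space M. 0 < f \<omega>}"
    obtain k where k: "max (f \<omega>) (1 / f \<omega>) < real k" using reals_Archimedean2 by blast
    hence "1 / f \<omega> < real (Suc k)" by simp
    hence "1 / real (Suc k) \<le> f \<omega>" using \<omega> by (simp add: field_simps)
    thus "\<omega> \<in> (\<Union>k. B k)" using k \<omega> unfolding B_def by auto
  qed
  moreover have "{\<omega>\<in>space M. 0 < f \<omega>} \<in> sets M" using f by measurable
  moreover have "{\<omega>\<in>space M. 0 < f \<omega>} \<notin> null_sets M"
    using pos by (simp add: null_sets_def emeasure_eq_measure)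
  ultimately have "\<not> (\<forall>k. B k \<in> null_sets M)"
    using null_sets_UN[of B M] null_sets_subset[of "\<Union>k. B k" M] by blast
  then obtain k where "B k \<notin> null_sets M" by blast
  hence "measure M (B k) \<noteq> 0" using B[of k] by (simp add: null_sets_def emeasure_eq_measure)
  hence "0 < measure M (B k)" using measure_nonneg[of M "B k"] by linarith
  moreover have "1 / real (Suc k) \<le> real (Suc k)"
    using order_trans[of "1 / real (Suc k)" 1 "real (Suc k)"] by simp
  ultimately show ?thesis using that[of "1 / real (Suc k)" "real (Suc k)"] unfolding B_def by simp
qed

lemma two_sided_mass:
  fixes \<xi> :: "'a \<Rightarrow> real"
  assumes M: "prob_space M" and \<xi>: "\<xi> \<in> borel_measurable M" "integrable M \<xi>"
    and mean: "(\<integral>\<omega>. \<xi> \<omega> \<partial>M) = 0" and var: "(\<integral>\<omega>. (\<xi> \<omega>)^2 \<partial>M) \<noteq> 0"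
  obtains a1 b1 a2 b2 p where "0 < a1" "a1 \<le> b1" "0 < a2" "a2 \<le> b2" "0 < p"
    "p \<le> measure M {\<omega>\<in>space M. a1 \<le> \<xi> \<omega> \<and> \<xi> \<omega> \<le> b1}"
    "p \<le> measure M {\<omega>\<in>space M. -b2 \<le> \<xi> \<omega> \<and> \<xi> \<omega> \<le> -a2}"
proof -
  obtain a1 b1 where 1: "0 < a1" "a1 \<le> b1" "0 < measure M {\<omega>\<in>space M. a1 \<le> \<xi> \<omega> \<and> \<xi> \<omega> \<le> b1}"
    using measure_interval_gt_0[OF M \<xi>(1) measure_pos_gt_0_of_mean_zero[OF M \<xi> mean var]] by blast
  have "0 < measure M {\<omega>\<in>space M. 0 < - \<xi> \<omega>}"
    using measure_pos_gt_0_of_mean_zero[OF M _ _ _ _, of "\<lambda>\<omega>. - \<xi> \<omega>"] \<xi> mean var by simp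
  then obtain a2 b2 where 2: "0 < a2" "a2 \<le> b2" "0 < measure M {\<omega>\<in>space M. a2 \<le> - \<xi> \<omega> \<and> - \<xi> \<omega> \<le> b2}"
    using measure_interval_gt_0[OF M, of "\<lambda>\<omega>. - \<xi> \<omega>"] \<xi> by auto
  have "{\<omega>\<in>space M. a2 \<le> - \<xi> \<omega> \<and> - \<xi> \<omega> \<le> b2} = {\<omega>\<in>space M. -b2 \<le> \<xi> \<omega> \<and> \<xi> \<omega> \<le> -a2}" by auto
  with 2(3) have 3: "0 < measure M {\<omega>\<in>space M. -b2 \<le> \<xi> \<omega> \<and> \<xi> \<omega> \<le> -a2}" by simp
  show ?thesis
    by (rule that[OF 1(1,2) 2(1,2) _ min.cobounded1 min.cobounded2]) (use 1(3) 3 in simp)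
qed

lemma prod_norm_weyl_phi_le:
  fixes \<xi> :: "'a \<Rightarrow> real" and \<eta> :: "nat \<Rightarrow> real" and K :: nat
  assumes M: "prob_space M" and \<xi>: "\<xi> \<in> borel_measurable M"
    and p: "0 < p" "p \<le> measure M {\<omega>\<in>space M. a1 \<le> \<xi> \<omega> \<and> \<xi> \<omega> \<le> b1}"
      "p \<le> measure M {\<omega>\<in>space M. -b2 \<le> \<xi> \<omega> \<and> \<xi> \<omega> \<le> -a2}"
    and C: "0 \<le> C" and N: "1 \<le> N" "1 \<le> ln N" and I: "I \<subseteq> {1..n}" "card I \<le> K"
    and G: "\<And>\<sigma>. a1 + a2 \<le> \<sigma> \<Longrightarrow> \<sigma> \<le> b1 + b2 \<Longrightarrow>
      (4 * C / p + 2 * real K) * ln N \<le> (\<Sum>i\<in>{1..n}. 1 - cos (\<sigma> * (\<Sum>j<d. weyl_w N x y i j * \<eta> j)))"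
  shows "norm (\<Prod>i\<in>{1..n} - I. weyl_phi M \<xi> d N x y i \<eta>) \<le> N powr (- C)"
proof -
  define t where "t i = (\<Sum>j<d. weyl_w N x y i j * \<eta> j)" for i
  have "4 * (C * ln N / p) \<le> (\<Sum>i\<in>{1..n} - I. 1 - cos (\<sigma> * t i))"
    if "a1 + a2 \<le> \<sigma>" "\<sigma> \<le> b1 + b2" for \<sigma>
  proof -
    have "4 * (C * ln N / p) + 2 * real K \<le> (4 * C / p + 2 * real K) * ln N"
      using N mult_left_mono[OF N(2), of "2 * real K"] by (simp add: algebra_simps)
    thus ?thesis using G[OF that] sum_one_minus_cos_le_diff[OF _ I(1), of "\<lambda>i. \<sigma> * t i"] I(2)
      unfolding t_def by simp
  qed
  hence "(\<Prod>i\<in>{1..n} - I. cmod (weyl_phi M \<xi> d N x y i \<eta>)) \<le> exp (- (p * (C * ln N / p)))"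
    unfolding weyl_phi_def t_def using N C p(1)
    by (intro prod_norm_char_le_exp[OF M \<xi> _ p(2,3)]) auto
  also have "\<dots> = N powr (- C)" using p(1) N(1) by (simp add: powr_def)
  finally show ?thesis by (simp add: prod_norm)
qed

section \<open>Asymptotics in N\<close>

lemma weyl_asymptotic_conditions:
  fixes c1 c2 \<epsilon> A b \<tau> B :: real
  assumes "0 < c1" "c1 < c2" "0 < \<epsilon>" "\<epsilon> < 1/2" "0 < b" "0 < \<tau>"
  shows "\<forall>\<^sub>F N in at_top. 8 \<le> c1 * N"
    "\<forall>\<^sub>F N in at_top. 4 \<le> N powr (1 + \<epsilon>/2)"
    "\<forall>\<^sub>F N in at_top. 16 * N powr (1 + \<epsilon>/2) \<le> (c1 * N)^2"
    "\<forall>\<^sub>F N in at_top. N powr (1 + \<epsilon>/2) + 2 \<le> N^2"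
    "\<forall>\<^sub>F N in at_top. c2 * N / 4 + 2 \<le> N powr (1 + \<epsilon>/2)"
    "\<forall>\<^sub>F N in at_top. 1 + (c2 * N)^2 / (8 * N powr (1 + \<epsilon>/2)) \<le> N powr (1 + \<epsilon>/2) / 2"
    "\<forall>\<^sub>F N in at_top. sqrt (N * exp (- (N powr (1 + \<epsilon>/2) / 4 - 1)
          * ((N powr (1 + \<epsilon>/2) / 4) / ((c2 * N)^2 + N powr (1 + \<epsilon>/2) / 4))))
        * (b * sqrt (N powr A)) * (1 + (N powr (1 + \<epsilon>/2) + 2) / (c1 * N)) \<le> \<tau> / 2"
    "\<forall>\<^sub>F N in at_top. N powr (1 + \<epsilon>/2) + 2 \<le> c1 * N * N powr \<epsilon>"
    "\<forall>\<^sub>F N in at_top. 1 \<le> c1 * N * N powr \<epsilon> / 2"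
    "\<forall>\<^sub>F N in at_top. sqrt (N * exp (- (c1 * N * N powr \<epsilon> / 2 - 1)
          * ((c1 * N * N powr \<epsilon> / 2) / ((c2 * N)^2 + c1 * N * N powr \<epsilon> / 2))))
        * (b * sqrt (N powr A)) * (1 + (2 * (c2 * N)^2 + N powr (1 + \<epsilon>/2) + 2) / (c1 * N)) \<le> \<tau> / 20"
    "\<forall>\<^sub>F N in at_top. B * ln N \<le> ((c1 * N)^2 / (16 * N powr (1 + \<epsilon>/2)) - 1) * \<tau>^2 / 500"
  using assms by - (real_asymp+)

text \<open>With the window length R = N powr (1 + \<epsilon>/2) the Poisson tail exp (- c R^2 / N^2)
  beats every power of N, the gap c1 N powr (1 + \<epsilon>) between x^2 and y^2 still exceeds R,
  and the resulting lower bound N^2 / R = N powr (1 - \<epsilon>/2) beats every multiple of ln N.\<close>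
lemma weyl_cos_sum_eventually_ge:
  fixes c1 c2 \<epsilon> A \<alpha> \<beta> r B :: real
  assumes c: "0 < c1" "c1 < c2" and \<epsilon>: "0 < \<epsilon>" "\<epsilon> < 1/2" and d: "d \<in> {1, 2, 4}"
    and \<alpha>: "0 < \<alpha>" "\<alpha> \<le> \<beta>" and r: "0 < r"
  shows "\<forall>\<^sub>F N in at_top. \<forall>n x y (\<eta> :: nat \<Rightarrow> real) \<sigma>.
    c2 * N \<le> sqrt (real n) - N \<and> x \<in> {c1 * N .. c2 * N}
      \<and> (d = 4 \<longrightarrow> y \<in> {c1 * N .. c2 * N} \<and> N powr \<epsilon> \<le> \<bar>x - y\<bar>)
    \<longrightarrow> r \<le> (\<Sum>j<d. (\<eta> j)^2) \<longrightarrow> (\<Sum>j<d. (\<eta> j)^2) \<le> N powr A \<longrightarrow> \<alpha> \<le> \<sigma> \<longrightarrow> \<sigma> \<le> \<beta>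
    \<longrightarrow> B * ln N \<le> (\<Sum>i\<in>{1..n}. 1 - cos (\<sigma> * (\<Sum>j<d. weyl_w N x y i j * \<eta> j)))"
proof -
  define D where "D = 4096 * exp 2 * (c2 + 1)"
  have D: "0 < D" unfolding D_def using c by (simp add: add_pos_pos)
  define \<tau> where "\<tau> = min 1 (sqrt (\<alpha>^2 * r / D))"
  have \<tau>: "0 < \<tau>" "\<tau> \<le> 1" unfolding \<tau>_def using \<alpha> r D by auto
  have "\<tau>^2 \<le> (sqrt (\<alpha>^2 * r / D))^2" unfolding \<tau>_def using \<tau> by (intro power_mono) (auto simp: \<tau>_def)
  hence \<tau>D: "D * \<tau>^2 \<le> \<alpha>^2 * r" using \<alpha> r D by (simp add: field_simps)
  have \<beta>: "0 < \<beta>" using \<alpha> by simp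
  note asym = weyl_asymptotic_conditions[OF c \<epsilon> \<beta> \<tau>(1)]
  from eventually_ge_at_top[of 1] asym(1-6) asym(7)[of A] asym(8,9) asym(10)[of A] asym(11)[of B]
  show ?thesis
  proof eventually_elim
    case (elim N)
    show ?case
    proof (intro allI impI, elim conjE)
      fix n x y \<sigma> and \<eta> :: "nat \<Rightarrow> real"
      assume n: "c2 * N \<le> sqrt (real n) - N" and x: "x \<in> {c1 * N .. c2 * N}"
        and y: "d = 4 \<longrightarrow> y \<in> {c1 * N .. c2 * N} \<and> N powr \<epsilon> \<le> \<bar>x - y\<bar>"
        and \<eta>: "r \<le> (\<Sum>j<d. (\<eta> j)^2)" "(\<Sum>j<d. (\<eta> j)^2) \<le> N powr A" and \<sigma>: "\<alpha> \<le> \<sigma>" "\<sigma> \<le> \<beta>"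
      have \<sigma>2: "\<alpha>^2 \<le> \<sigma>^2" "\<sigma>^2 \<le> \<beta>^2" using \<sigma> \<alpha> by (auto intro!: power_mono)
      have "\<alpha>^2 * r \<le> \<sigma>^2 * (\<Sum>j<d. (\<eta> j)^2)" using \<sigma>2 \<eta> r by (intro mult_mono) auto
      hence "D * \<tau>^2 \<le> \<sigma>^2 * (\<Sum>j<d. (\<eta> j)^2)" using \<tau>D by linarith
      moreover have "sqrt (\<sigma>^2 * (\<Sum>j<d. (\<eta> j)^2)) \<le> sqrt (\<beta>^2 * N powr A)"
        using \<sigma>2 \<eta> r by (intro real_sqrt_le_mono mult_mono) auto
      hence "sqrt (\<sigma>^2 * (\<Sum>j<d. (\<eta> j)^2)) \<le> \<beta> * sqrt (N powr A)"
        using \<beta> by (simp add: real_sqrt_mult)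
      ultimately have "((c1 * N)^2 / (16 * N powr (1 + \<epsilon>/2)) - 1) * \<tau>^2 / 500
          \<le> (\<Sum>i\<in>{1..n}. 1 - cos (\<sigma> * (\<Sum>j<d. weyl_w N x y i j * \<eta> j)))"
        using elim x y n c \<tau> unfolding D_def
        by (intro weyl_cos_sum_ge_vector[OF d]) (auto simp: algebra_simps)
      thus "B * ln N \<le> (\<Sum>i\<in>{1..n}. 1 - cos (\<sigma> * (\<Sum>j<d. weyl_w N x y i j * \<eta> j)))"
        using elim(12) by linarith
    qed
  qed
qed

theorem theorem3p18:
  fixes M :: "'a measure" and \<xi> :: "'a \<Rightarrow> real"
    and A C r \<epsilon>g c1 c2 :: real and K d :: nat
  assumes "prob_space M"
    and "\<xi> \<in> borel_measurable M"
    and "integrable M \<xi>" and "(\<integral>\<omega>. \<xi> \<omega> \<partial>M) = 0"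
    and "integrable M (\<lambda>\<omega>. (\<xi> \<omega>)^2)" and "(\<integral>\<omega>. (\<xi> \<omega>)^2 \<partial>M) = 1"
    and "0 < A" and "0 < C" and "0 < K" and "0 < r"
    and "0 < \<epsilon>g" and "\<epsilon>g < 1/2"
    and "0 < c1" and "c1 < c2"
    and "d \<in> {1, 2, 4}"
  shows "\<exists>N0. \<forall>N::real \<ge> N0. \<forall>n::nat. \<forall>x y::real.
           (c2 * N \<le> sqrt (real n) - N
            \<and> x \<in> {c1 * N .. c2 * N}
            \<and> (d = 4 \<longrightarrow> y \<in> {c1 * N .. c2 * N} \<and> \<bar>x - y\<bar> \<ge> N powr \<epsilon>g))
           \<longrightarrow> (\<forall>I \<subseteq> {1..n}. card I \<le> K \<longrightarrow>
                (\<forall>\<eta>::nat \<Rightarrow> real. r \<le> (\<Sum>j<d. (\<eta> j)^2) \<and> (\<Sum>j<d. (\<eta> j)^2) \<le> N powr A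
                   \<longrightarrow> norm (\<Prod>i\<in>{1..n} - I. weyl_phi M \<xi> d N x y i \<eta>) \<le> N powr (- C)))"
proof -
  have "(\<integral>\<omega>. (\<xi> \<omega>)^2 \<partial>M) \<noteq> 0" using assms(6) by simp
  then obtain a1 b1 a2 b2 p where ab: "0 < a1" "a1 \<le> b1" "0 < a2" "a2 \<le> b2" and p: "0 < p"
    "p \<le> measure M {\<omega>\<in>space M. a1 \<le> \<xi> \<omega> \<and> \<xi> \<omega> \<le> b1}"
    "p \<le> measure M {\<omega>\<in>space M. -b2 \<le> \<xi> \<omega> \<and> \<xi> \<omega> \<le> -a2}"
    by (rule two_sided_mass[OF assms(1-4)])
  have \<alpha>: "0 < a1 + a2" "a1 + a2 \<le> b1 + b2" using ab by auto
  have "\<forall>\<^sub>F N in at_top. 1 \<le> ln (N :: real)" by real_asymp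
  with eventually_ge_at_top[of 1] weyl_cos_sum_eventually_ge[OF assms(13,14,11,12,15) \<alpha> assms(10),
      where A = A and B = "4 * C / p + 2 * real K"]
  show ?thesis unfolding eventually_at_top_linorder[symmetric]
  proof eventually_elim
    case (elim N)
    show ?case
      using elim assms(8) by (intro allI impI prod_norm_weyl_phi_le[OF assms(1,2) p]) auto
  qed
qed

end
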